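(* Let $1\le k\le n\le 4$ and let $\mathcal{C}$ be a strict $n$-category. Then any functor between $(n-k)$-categories of $k$-morphisms in $\mathcal{C}$ given by composition with invertible morphisms of dimension $\le k$ is essentially surjective. When $k=n$, any such functor is a bijection.
   Context: For parallel $(k-1)$-morphisms $x,y$ in a strict $n$-category, the $k$-morphisms $x\to y$ form a strict $(n-k)$-category $k\mathrm{Hom}(x,y)$. Composing (whiskering) with a fixed morphism $h$ of dimension $\ell\le k$ along an $(\ell-1)$-morphism gives a functor from such an $(n-k)$-category of $k$-morphisms to another; the functors considered are composites of such functors with $h$ invertible. In a strict $n$-category an $n$-morphism is an equivalence iff it is an isomorphism, and for $j<n$ a $j$-morphism $f:x\to y$ is an equivalence (invertible, weakly invertible) if there exist $g:y\to x$ and equivalences $f\circ g\to\mathrm{id}_y$ and $g\circ f\to\mathrm{id}_x$. A functor $F:\mathcal{A}\to\mathcal{B}$ of strict $m$-categories is essentially surjective if for every object $b$ of $\mathcal{B}$ there is an object $a$ of $\mathcal{A}$ and an equivalence $F(a)\to b$ (for $m=0$ this means surjective). *)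

theory Defs
  imports Main
begin

text \<open>Strict n-categories in the single-sorted (Street) presentation:
  a set of cells, source/target operators s_j, t_j and partial compositions #_j
  for j < n.  A j-cell (j < n) is a cell x with s_j x = x; every cell is an n-cell.
  Lower-dimensional cells are identified with their identities.
  Composition is diagrammatic: comp j x y is defined when tgt j x = src j y.\<close>

record 'a ncat =
  cells :: "'a set"
  src   :: "nat \<Rightarrow> 'a \<Rightarrow> 'a"
  tgt   :: "nat \<Rightarrow> 'a \<Rightarrow> 'a"
  comp  :: "nat \<Rightarrow> 'a \<Rightarrow> 'a \<Rightarrow> 'a"

definition strict_ncat :: "nat \<Rightarrow> 'a ncat \<Rightarrow> bool" where
  "strict_ncat n C \<longleftrightarrow>
     (\<forall>j<n. \<forall>x\<in>cells C. src C j x \<in> cells C \<and> tgt C j x \<in> cells C)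
   \<and> (\<forall>j<n. \<forall>x\<in>cells C. \<forall>y\<in>cells C. tgt C j x = src C j y \<longrightarrow> comp C j x y \<in> cells C)
   \<and> (\<forall>i<n. \<forall>j<n. \<forall>x\<in>cells C. i < j \<longrightarrow>
        src C i (src C j x) = src C i x \<and> src C i (tgt C j x) = src C i x \<and>
        tgt C i (src C j x) = tgt C i x \<and> tgt C i (tgt C j x) = tgt C i x)
   \<and> (\<forall>i<n. \<forall>j<n. \<forall>x\<in>cells C. j \<le> i \<longrightarrow>
        src C i (src C j x) = src C j x \<and> tgt C i (src C j x) = src C j x \<and>
        src C i (tgt C j x) = tgt C j x \<and> tgt C i (tgt C j x) = tgt C j x)
   \<and> (\<forall>j<n. \<forall>x\<in>cells C. \<forall>y\<in>cells C. tgt C j x = src C j y \<longrightarrow>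
        src C j (comp C j x y) = src C j x \<and> tgt C j (comp C j x y) = tgt C j y)
   \<and> (\<forall>i<n. \<forall>j<n. \<forall>x\<in>cells C. \<forall>y\<in>cells C. j < i \<longrightarrow> tgt C j x = src C j y \<longrightarrow>
        src C i (comp C j x y) = comp C j (src C i x) (src C i y) \<and>
        tgt C i (comp C j x y) = comp C j (tgt C i x) (tgt C i y))
   \<and> (\<forall>j<n. \<forall>x\<in>cells C. comp C j (src C j x) x = x \<and> comp C j x (tgt C j x) = x)
   \<and> (\<forall>j<n. \<forall>x\<in>cells C. \<forall>y\<in>cells C. \<forall>z\<in>cells C.
        tgt C j x = src C j y \<longrightarrow> tgt C j y = src C j z \<longrightarrow>
        comp C j (comp C j x y) z = comp C j x (comp C j y z))
   \<and> (\<forall>i<n. \<forall>j<n. \<forall>x\<in>cells C. \<forall>y\<in>cells C. \<forall>z\<in>cells C. \<forall>w\<in>cells C.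
        i < j \<longrightarrow> tgt C j x = src C j y \<longrightarrow> tgt C j z = src C j w \<longrightarrow>
        tgt C i x = src C i z \<longrightarrow>
        comp C i (comp C j x y) (comp C j z w) = comp C j (comp C i x z) (comp C i y w))"

definition is_cell :: "nat \<Rightarrow> 'a ncat \<Rightarrow> nat \<Rightarrow> 'a \<Rightarrow> bool" where
  "is_cell n C j x \<longleftrightarrow> x \<in> cells C \<and> (j < n \<longrightarrow> src C j x = x)"

text \<open>Equivalences, by descending recursion on the dimension: eqv_aux n C d j f,
  with d = n - j.  For j = n (d = 0) an equivalence is an isomorphism; otherwise
  f : x \<rightarrow> y is an equivalence if there is g : y \<rightarrow> x and equivalences
  f \<circ> g \<rightarrow> id_y and g \<circ> f \<rightarrow> id_x (identities of lower cells are the cells themselves,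
  and f \<circ> g is comp (j-1) g f in diagrammatic order).\<close>
fun eqv_aux :: "nat \<Rightarrow> 'a ncat \<Rightarrow> nat \<Rightarrow> nat \<Rightarrow> 'a \<Rightarrow> bool" where
  "eqv_aux n C 0 j f \<longleftrightarrow>
     (\<exists>g. is_cell n C j g \<and> src C (j-1) g = tgt C (j-1) f \<and> tgt C (j-1) g = src C (j-1) f \<and>
          comp C (j-1) f g = src C (j-1) f \<and> comp C (j-1) g f = tgt C (j-1) f)"
| "eqv_aux n C (Suc d) j f \<longleftrightarrow>
     (\<exists>g \<alpha> \<beta>. is_cell n C j g \<and> src C (j-1) g = tgt C (j-1) f \<and> tgt C (j-1) g = src C (j-1) f \<and>
          is_cell n C (j+1) \<alpha> \<and> src C j \<alpha> = comp C (j-1) g f \<and> tgt C j \<alpha> = tgt C (j-1) f \<and>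
          eqv_aux n C d (j+1) \<alpha> \<and>
          is_cell n C (j+1) \<beta> \<and> src C j \<beta> = comp C (j-1) f g \<and> tgt C j \<beta> = src C (j-1) f \<and>
          eqv_aux n C d (j+1) \<beta>)"

definition eqv :: "nat \<Rightarrow> 'a ncat \<Rightarrow> nat \<Rightarrow> 'a \<Rightarrow> bool" where
  "eqv n C j f \<longleftrightarrow> 1 \<le> j \<and> j \<le> n \<and> is_cell n C j f \<and> eqv_aux n C (n - j) j f"

definition hom :: "'a ncat \<Rightarrow> nat \<Rightarrow> 'a \<Rightarrow> 'a \<Rightarrow> 'a ncat" where
  "hom C k x y = \<lparr> cells = {c \<in> cells C. src C (k-1) c = x \<and> tgt C (k-1) c = y},
                   src = (\<lambda>j. src C (k+j)), tgt = (\<lambda>j. tgt C (k+j)),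
                   comp = (\<lambda>j. comp C (k+j)) \<rparr>"

definition ess_surj :: "nat \<Rightarrow> 'a ncat \<Rightarrow> 'a ncat \<Rightarrow> ('a \<Rightarrow> 'a) \<Rightarrow> bool" where
  "ess_surj m A B F \<longleftrightarrow>
     (if m = 0 then (\<forall>b\<in>cells B. \<exists>a\<in>cells A. F a = b)
      else (\<forall>b. is_cell m B 0 b \<longrightarrow>
              (\<exists>a e. is_cell m A 0 a \<and> is_cell m B 1 e \<and> src B 0 e = F a \<and> tgt B 0 e = b
                     \<and> eqv m B 1 e)))"

definition parallel :: "nat \<Rightarrow> 'a ncat \<Rightarrow> nat \<Rightarrow> 'a \<Rightarrow> 'a \<Rightarrow> bool" where
  "parallel n C k x y \<longleftrightarrow> is_cell n C (k-1) x \<and> is_cell n C (k-1) y \<and>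
     (2 \<le> k \<longrightarrow> src C (k-2) x = src C (k-2) y \<and> tgt C (k-2) x = tgt C (k-2) y)"

text \<open>whisk_fun n C k x y x' y' F: F : kHom(x,y) \<rightarrow> kHom(x',y') is a (nonempty) composite of
  functors given by composing (whiskering) with an invertible l-morphism h, 1 \<le> l \<le> k,
  along an (l-1)-morphism, on the left or on the right.\<close>
inductive whisk_fun :: "nat \<Rightarrow> 'a ncat \<Rightarrow> nat \<Rightarrow> 'a \<Rightarrow> 'a \<Rightarrow> 'a \<Rightarrow> 'a \<Rightarrow> ('a \<Rightarrow> 'a) \<Rightarrow> bool"
  for n C k where
  left: "\<lbrakk> 1 \<le> l; l \<le> k; eqv n C l h; parallel n C k x y; tgt C (l-1) h = src C (l-1) x \<rbrakk> \<Longrightarrow>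
     whisk_fun n C k x y
       (if l < k then comp C (l-1) h x else src C (k-1) h)
       (if l < k then comp C (l-1) h y else y)
       (\<lambda>c. comp C (l-1) h c)"
| right: "\<lbrakk> 1 \<le> l; l \<le> k; eqv n C l h; parallel n C k x y; tgt C (l-1) y = src C (l-1) h \<rbrakk> \<Longrightarrow>
     whisk_fun n C k x y
       (if l < k then comp C (l-1) x h else x)
       (if l < k then comp C (l-1) y h else tgt C (k-1) h)
       (\<lambda>c. comp C (l-1) c h)"
| compose: "\<lbrakk> whisk_fun n C k x y x' y' F; whisk_fun n C k x' y' x'' y'' G \<rbrakk> \<Longrightarrow>
     whisk_fun n C k x y x'' y'' (G \<circ> F)"

end

theory Submission
  imports Defs
begin

text \<open>
  Whiskering by an invertible l-cell h is handled by descending induction on l.  For l = n,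
  whiskering by an inverse of h is an inverse map.  For l < n choose a weak inverse g of h and
  equivalence (l+1)-cells from g h and from h g to identities.  By the interchange law,
  whiskering by g h is conjugate to the identity via whiskerings by (l+1)-cells built from these
  equivalences.  By induction the latter are bijective on n-cells and essentially surjective on
  all higher hom categories, hence (by a second descending induction) they also reflect
  equivalence of cells.  So whiskering by h followed by g is bijective on n-cells and
  essentially surjective, and whiskering by g followed by h reflects equivalence; together this
  makes whiskering by h bijective on n-cells and essentially surjective.  Composites inherit both
  properties.
\<close>

datatype side = Left | Right

primrec flip :: "side \<Rightarrow> side" where
  "flip Left = Right"
| "flip Right = Left"

lemma flip_flip [simp]: "flip (flip sd) = sd"
  by (cases sd) auto

lemma bij_betw_if_bij_betw_comp:
  assumes "f ` A \<subseteq> B" "g ` B \<subseteq> C" "bij_betw (\<lambda>a. g (f a)) A C" "inj_on (\<lambda>b. f' (g b)) B"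
  shows "bij_betw f A B"
proof -
  have inj: "inj_on f A" "inj_on g B"
    using assms(3,4) unfolding bij_betw_def inj_on_def by metis+
  have "B \<subseteq> f ` A"
  proof
    fix b
    assume "b \<in> B"
    then have "g b \<in> (\<lambda>a. g (f a)) ` A"
      using assms(2,3) by (auto simp: bij_betw_def)
    then obtain a where "a \<in> A" "g b = g (f a)"
      by auto
    then show "b \<in> f ` A"
      using assms(1) inj(2) \<open>b \<in> B\<close> by (auto dest: inj_onD)
  qed
  then show ?thesis
    using assms(1) inj(1) by (auto simp: bij_betw_def)
qed

section \<open>Strict n-categories\<close>

locale strict_ncategory =
  fixes n :: nat and C :: "'a ncat"
  assumes src_in_cells [simp]: "j < n \<Longrightarrow> x \<in> cells C \<Longrightarrow> src C j x \<in> cells C"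
    and tgt_in_cells [simp]: "j < n \<Longrightarrow> x \<in> cells C \<Longrightarrow> tgt C j x \<in> cells C"
    and comp_in_cells [simp]: "j < n \<Longrightarrow> x \<in> cells C \<Longrightarrow> y \<in> cells C \<Longrightarrow>
      tgt C j x = src C j y \<Longrightarrow> comp C j x y \<in> cells C"
    and src_src_lower [simp]: "i < j \<Longrightarrow> j < n \<Longrightarrow> x \<in> cells C \<Longrightarrow> src C i (src C j x) = src C i x"
    and src_tgt_lower [simp]: "i < j \<Longrightarrow> j < n \<Longrightarrow> x \<in> cells C \<Longrightarrow> src C i (tgt C j x) = src C i x"
    and tgt_src_lower [simp]: "i < j \<Longrightarrow> j < n \<Longrightarrow> x \<in> cells C \<Longrightarrow> tgt C i (src C j x) = tgt C i x"
    and tgt_tgt_lower [simp]: "i < j \<Longrightarrow> j < n \<Longrightarrow> x \<in> cells C \<Longrightarrow> tgt C i (tgt C j x) = tgt C i x"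
    and src_src_higher [simp]: "j \<le> i \<Longrightarrow> i < n \<Longrightarrow> x \<in> cells C \<Longrightarrow> src C i (src C j x) = src C j x"
    and tgt_src_higher [simp]: "j \<le> i \<Longrightarrow> i < n \<Longrightarrow> x \<in> cells C \<Longrightarrow> tgt C i (src C j x) = src C j x"
    and src_tgt_higher [simp]: "j \<le> i \<Longrightarrow> i < n \<Longrightarrow> x \<in> cells C \<Longrightarrow> src C i (tgt C j x) = tgt C j x"
    and tgt_tgt_higher [simp]: "j \<le> i \<Longrightarrow> i < n \<Longrightarrow> x \<in> cells C \<Longrightarrow> tgt C i (tgt C j x) = tgt C j x"
    and src_comp [simp]: "j < n \<Longrightarrow> x \<in> cells C \<Longrightarrow> y \<in> cells C \<Longrightarrow>
      tgt C j x = src C j y \<Longrightarrow> src C j (comp C j x y) = src C j x"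
    and tgt_comp [simp]: "j < n \<Longrightarrow> x \<in> cells C \<Longrightarrow> y \<in> cells C \<Longrightarrow>
      tgt C j x = src C j y \<Longrightarrow> tgt C j (comp C j x y) = tgt C j y"
    and src_comp_lower [simp]: "j < i \<Longrightarrow> i < n \<Longrightarrow> x \<in> cells C \<Longrightarrow> y \<in> cells C \<Longrightarrow>
      tgt C j x = src C j y \<Longrightarrow> src C i (comp C j x y) = comp C j (src C i x) (src C i y)"
    and tgt_comp_lower [simp]: "j < i \<Longrightarrow> i < n \<Longrightarrow> x \<in> cells C \<Longrightarrow> y \<in> cells C \<Longrightarrow>
      tgt C j x = src C j y \<Longrightarrow> tgt C i (comp C j x y) = comp C j (tgt C i x) (tgt C i y)"
    and comp_src_left [simp]: "j < n \<Longrightarrow> x \<in> cells C \<Longrightarrow> comp C j (src C j x) x = x"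
    and comp_tgt_right [simp]: "j < n \<Longrightarrow> x \<in> cells C \<Longrightarrow> comp C j x (tgt C j x) = x"
    and assoc: "j < n \<Longrightarrow> x \<in> cells C \<Longrightarrow> y \<in> cells C \<Longrightarrow> z \<in> cells C \<Longrightarrow>
      tgt C j x = src C j y \<Longrightarrow> tgt C j y = src C j z \<Longrightarrow>
      comp C j (comp C j x y) z = comp C j x (comp C j y z)"
    and interchange: "i < j \<Longrightarrow> j < n \<Longrightarrow>
      x \<in> cells C \<Longrightarrow> y \<in> cells C \<Longrightarrow> z \<in> cells C \<Longrightarrow> w \<in> cells C \<Longrightarrow>
      tgt C j x = src C j y \<Longrightarrow> tgt C j z = src C j w \<Longrightarrow> tgt C i x = src C i z \<Longrightarrow>
      comp C i (comp C j x y) (comp C j z w) = comp C j (comp C i x z) (comp C i y w)"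

lemma strict_ncategoryI: "strict_ncat n C \<Longrightarrow> strict_ncategory n C"
  unfolding strict_ncat_def
  by (elim conjE, unfold_locales) (meson order.strict_trans order.strict_trans1)+

context strict_ncategory
begin

abbreviation s where "s \<equiv> src C"
abbreviation t where "t \<equiv> tgt C"
abbreviation c where "c \<equiv> comp C"

lemma bdry_comp_higher [simp]:
  assumes "i < j" "j < n" "x \<in> cells C" "y \<in> cells C" "t j x = s j y"
  shows "s i (c j x y) = s i x" "t i (c j x y) = t i y"
  by (metis assms comp_in_cells src_comp src_src_lower)
    (metis assms comp_in_cells tgt_comp tgt_tgt_lower)

lemma comp_unit_left [simp]: "j < n \<Longrightarrow> x \<in> cells C \<Longrightarrow> a = s j x \<Longrightarrow> c j a x = x"
  by simp

lemma comp_unit_right [simp]: "j < n \<Longrightarrow> x \<in> cells C \<Longrightarrow> a = t j x \<Longrightarrow> c j x a = x"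
  by simp

lemma tgt_fixed_if_src_fixed: "j < n \<Longrightarrow> x \<in> cells C \<Longrightarrow> s j x = x \<Longrightarrow> t j x = x"
  by (metis tgt_src_higher order.refl)

lemma bdry_fixed_mono:
  "s j x = x \<Longrightarrow> j \<le> i \<Longrightarrow> i < n \<Longrightarrow> x \<in> cells C \<Longrightarrow> s i x = x \<and> t i x = x"
  by (metis src_src_higher tgt_src_higher)

lemma lower_bdry_comp:
  assumes "i < j" "j < n" "a \<in> cells C" "b \<in> cells C" "t j a = s j b"
  shows "s i b = s i a" "t i b = t i a"
  by (metis assms src_src_lower src_tgt_lower) (metis assms tgt_tgt_lower tgt_src_lower)

section \<open>Whiskering\<close>

definition whisk :: "side \<Rightarrow> nat \<Rightarrow> 'a \<Rightarrow> 'a \<Rightarrow> 'a" where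
  "whisk sd i h a = (case sd of Left \<Rightarrow> c i h a | Right \<Rightarrow> c i a h)"

definition face :: "side \<Rightarrow> nat \<Rightarrow> 'a \<Rightarrow> 'a" where
  "face sd i h = (case sd of Left \<Rightarrow> t i h | Right \<Rightarrow> s i h)"

abbreviation composable :: "side \<Rightarrow> nat \<Rightarrow> 'a \<Rightarrow> 'a \<Rightarrow> bool" where
  "composable sd i h a \<equiv> face sd i h = face (flip sd) i a"

lemma whisk_flip: "whisk (flip sd) i a b = whisk sd i b a"
  by (cases sd) (auto simp: whisk_def)

lemma whisk_in_cells [simp]:
  "i < n \<Longrightarrow> h \<in> cells C \<Longrightarrow> a \<in> cells C \<Longrightarrow> composable sd i h a \<Longrightarrow> whisk sd i h a \<in> cells C"
  by (cases sd) (auto simp: whisk_def face_def)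

lemma face_whisk:
  assumes "i < n" "h \<in> cells C" "a \<in> cells C" "composable sd i h a"
  shows "face sd i (whisk sd i h a) = face sd i a" "face (flip sd) i (whisk sd i h a) = face (flip sd) i h"
  using assms by (cases sd; simp add: whisk_def face_def)+

lemma face_src_higher [simp]: "i < j \<Longrightarrow> j < n \<Longrightarrow> a \<in> cells C \<Longrightarrow> face sd i (s j a) = face sd i a"
  by (cases sd) (auto simp: face_def)

lemma face_tgt_higher [simp]: "i < j \<Longrightarrow> j < n \<Longrightarrow> a \<in> cells C \<Longrightarrow> face sd i (t j a) = face sd i a"
  by (cases sd) (auto simp: face_def)

lemma face_face [simp]: "i < n \<Longrightarrow> h \<in> cells C \<Longrightarrow> face sd' i (face sd i h) = face sd i h"
  by (cases sd; cases sd') (auto simp: face_def)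

lemma face_comp_higher:
  assumes "i < j" "j < n" "a \<in> cells C" "b \<in> cells C" "t j a = s j b"
  shows "face sd i (c j a b) = face sd i a" "face sd i b = face sd i a"
  using assms lower_bdry_comp[OF assms] by (cases sd; simp add: face_def)+

lemma composable_via_bdry:
  assumes "i < p" "p < n" "f \<in> cells C" "g \<in> cells C" "s p g = t p f" "composable sd i h f"
  shows "composable sd i h g"
  using assms face_src_higher[of i p g "flip sd"] face_tgt_higher[of i p f "flip sd"] by simp

lemma bdry_whisk_higher:
  assumes "i < j" "j < n" "h \<in> cells C" "s j h = h" "a \<in> cells C" "composable sd i h a"
  shows "s j (whisk sd i h a) = whisk sd i h (s j a)" "t j (whisk sd i h a) = whisk sd i h (t j a)"
  using assms tgt_fixed_if_src_fixed[of j h] by (cases sd; simp add: whisk_def face_def)+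

lemma whisk_comp_higher:
  assumes "i < j" "j < n" "h \<in> cells C" "s j h = h" "a \<in> cells C" "b \<in> cells C"
    and "t j a = s j b" "composable sd i h a"
  shows "whisk sd i h (c j a b) = c j (whisk sd i h a) (whisk sd i h b)"
proof -
  have hh: "c j h h = h" "t j h = h"
    using assms tgt_fixed_if_src_fixed[of j h] by simp_all
  show ?thesis
  proof (cases sd)
    case Left
    then have "c i (c j h h) (c j a b) = c j (c i h a) (c i h b)"
      using assms hh by (intro interchange) (simp_all add: face_def)
    then show ?thesis
      using Left hh by (simp add: whisk_def)
  next
    case Right
    then have "c i (c j a b) (c j h h) = c j (c i a h) (c i b h)"
      using assms hh by (intro interchange) (simp_all add: face_def)
    then show ?thesis
      using Right hh by (simp add: whisk_def)
  qed
qed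

lemma whisk_assoc:
  assumes "i < n" "g \<in> cells C" "h \<in> cells C" "a \<in> cells C"
    and "composable sd i g h" "composable sd i h a"
  shows "whisk sd i g (whisk sd i h a) = whisk sd i (whisk sd i g h) a"
  using assms assoc[of i g h a] assoc[of i a h g]
  by (cases sd) (auto simp: whisk_def face_def)

lemma composable_whisk:
  assumes "i < n" "g \<in> cells C" "a \<in> cells C" "composable sd i g a" "composable sd i h g"
  shows "composable sd i h (whisk sd i g a)"
  using assms by (cases sd) (auto simp: whisk_def face_def)

lemma whisk_face_unit [simp]:
  "i < n \<Longrightarrow> a \<in> cells C \<Longrightarrow> z = face (flip sd) i a \<Longrightarrow> whisk sd i z a = a"
  by (cases sd) (auto simp: whisk_def face_def)

lemma whisk_factor_src:
  assumes "i < l" "l < n" "a \<in> cells C" "b \<in> cells C" "composable sd i a b"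
  shows "whisk sd i a b = c l (whisk sd i a (s l b)) (whisk sd i (t l a) b)"
proof (cases sd)
  case Left
  then have "c i (c l a (t l a)) (c l (s l b) b) = c l (c i a (s l b)) (c i (t l a) b)"
    using assms by (intro interchange) (simp_all add: face_def)
  then show ?thesis
    using Left assms by (simp add: whisk_def)
next
  case Right
  then have "c i (c l (s l b) b) (c l a (t l a)) = c l (c i (s l b) a) (c i b (t l a))"
    using assms by (intro interchange) (simp_all add: face_def)
  then show ?thesis
    using Right assms by (simp add: whisk_def)
qed

lemma whisk_factor_tgt:
  assumes "i < l" "l < n" "a \<in> cells C" "b \<in> cells C" "composable sd i a b"
  shows "whisk sd i a b = c l (whisk sd i (s l a) b) (whisk sd i a (t l b))"
proof (cases sd)
  case Left
  then have "c i (c l (s l a) a) (c l b (t l b)) = c l (c i (s l a) b) (c i a (t l b))"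
    using assms by (intro interchange) (simp_all add: face_def)
  then show ?thesis
    using Left assms by (simp add: whisk_def)
next
  case Right
  then have "c i (c l b (t l b)) (c l (s l a) a) = c l (c i b (s l a)) (c i (t l b) a)"
    using assms by (intro interchange) (simp_all add: face_def)
  then show ?thesis
    using Right assms by (simp add: whisk_def)
qed

section \<open>Equivalences\<close>

definition equivalent :: "nat \<Rightarrow> 'a \<Rightarrow> 'a \<Rightarrow> bool" where
  "equivalent k a b \<longleftrightarrow> (\<exists>e. eqv n C (Suc k) e \<and> s k e = a \<and> t k e = b)"

lemma eqv_in_cells: "eqv n C j f \<Longrightarrow> f \<in> cells C"
  by (simp add: eqv_def is_cell_def)

lemma eqv_src_fixed: "eqv n C j f \<Longrightarrow> j < n \<Longrightarrow> s j f = f"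
  by (simp add: eqv_def is_cell_def)

lemma eqv_dim: "eqv n C j f \<Longrightarrow> 1 \<le> j \<and> j \<le> n"
  by (simp add: eqv_def)

lemma equivalentE:
  assumes "equivalent k a b"
  obtains e where "eqv n C (Suc k) e" "e \<in> cells C" "s k e = a" "t k e = b" "k < n"
  using assms eqv_in_cells eqv_dim unfolding equivalent_def by (metis Suc_le_eq)

lemma eqv_top:
  "eqv n C n f \<longleftrightarrow> 1 \<le> n \<and> f \<in> cells C \<and>
     (\<exists>g. g \<in> cells C \<and> s (n-1) g = t (n-1) f \<and> t (n-1) g = s (n-1) f \<and>
          c (n-1) f g = s (n-1) f \<and> c (n-1) g f = t (n-1) f)"
  by (auto simp: eqv_def is_cell_def)

lemma eqv_below_top:
  assumes "j < n"
  shows "eqv n C j f \<longleftrightarrow> 1 \<le> j \<and> f \<in> cells C \<and> s j f = f \<and>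
     (\<exists>g. g \<in> cells C \<and> s j g = g \<and> s (j-1) g = t (j-1) f \<and> t (j-1) g = s (j-1) f \<and>
          equivalent j (c (j-1) g f) (t (j-1) f) \<and> equivalent j (c (j-1) f g) (s (j-1) f))"
proof -
  have "n - j = Suc (n - Suc j)"
    using assms by simp
  then have "eqv n C j f \<longleftrightarrow> 1 \<le> j \<and> is_cell n C j f \<and> eqv_aux n C (Suc (n - Suc j)) j f"
    using assms by (simp add: eqv_def del: eqv_aux.simps)
  moreover have "eqv n C (Suc j) a \<longleftrightarrow> is_cell n C (j+1) a \<and> eqv_aux n C (n - Suc j) (j+1) a" for a
    using assms by (simp add: eqv_def del: eqv_aux.simps)
  ultimately show ?thesis
    using assms unfolding eqv_aux.simps(2) equivalent_def is_cell_def by auto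
qed

lemma eqv_inverse:
  assumes "eqv n C j f" "j < n"
  obtains g where "eqv n C j g" "s (j-1) g = t (j-1) f" "t (j-1) g = s (j-1) f"
    "equivalent j (c (j-1) g f) (t (j-1) f)" "equivalent j (c (j-1) f g) (s (j-1) f)"
proof -
  obtain g where g: "g \<in> cells C" "s j g = g" "s (j-1) g = t (j-1) f" "t (j-1) g = s (j-1) f"
    "equivalent j (c (j-1) g f) (t (j-1) f)" "equivalent j (c (j-1) f g) (s (j-1) f)"
    using assms eqv_below_top by blast
  moreover have "eqv n C j g"
    using assms g eqv_below_top[of j g] eqv_below_top[of j f] by auto
  ultimately show thesis
    using that by blast
qed

lemma equivalent_whisk_if_eqv_whisk:
  assumes "\<And>e. eqv n C (Suc k) e \<Longrightarrow> composable sd i h e \<Longrightarrow> eqv n C (Suc k) (whisk sd i h e)"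
    and "i < k" "k < n" "h \<in> cells C" "s k h = h" "composable sd i h a" "equivalent k a b"
  shows "equivalent k (whisk sd i h a) (whisk sd i h b)"
proof -
  obtain e where e: "eqv n C (Suc k) e" "s k e = a" "t k e = b"
    using assms(7) equivalent_def by blast
  have ec: "e \<in> cells C"
    using e(1) eqv_in_cells by blast
  then have "composable sd i h e"
    using assms(2,3,6) e(2) face_src_higher[of i k e "flip sd"] by simp
  then show ?thesis
    unfolding equivalent_def using assms(1-5) e ec bdry_whisk_higher[of i k h e sd] by auto
qed

lemma eqv_whisk_top:
  assumes f: "eqv n C n f" and h: "i + 1 < n" "h \<in> cells C" "s (n-1) h = h" "composable sd i h f"
  shows "eqv n C n (whisk sd i h f)"
proof -
  define p where "p = n - 1"
  obtain g where g: "g \<in> cells C" "s p g = t p f" "t p g = s p f" "c p f g = s p f" "c p g f = t p f"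
    using f[unfolded eqv_top] unfolding p_def by blast
  have fc: "f \<in> cells C"
    using f eqv_in_cells by blast
  have p: "i < p" "p < n" "s p h = h"
    using h p_def by auto
  have hg: "composable sd i h g"
    using composable_via_bdry[OF p(1,2) fc g(1,2) h(4)] .
  let ?W = "whisk sd i h"
  have W: "?W (c p f g) = c p (?W f) (?W g)" "?W (c p g f) = c p (?W g) (?W f)"
    by (rule whisk_comp_higher; use p fc g hg h in simp)+
  have B: "s p (?W f) = ?W (s p f)" "t p (?W f) = ?W (t p f)"
    "s p (?W g) = ?W (s p g)" "t p (?W g) = ?W (t p g)"
    by (rule bdry_whisk_higher; use p fc g hg h in simp)+
  have "?W g \<in> cells C" "s p (?W g) = t p (?W f)" "t p (?W g) = s p (?W f)"
    "c p (?W f) (?W g) = s p (?W f)" "c p (?W g) (?W f) = t p (?W f)"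
    using W B g p fc hg h(2) by (simp_all only: whisk_in_cells)
  then show ?thesis
    unfolding eqv_top p_def[symmetric] using fc h p by auto
qed

lemma eqv_whisk:
  assumes "j \<le> n" "eqv n C j f" "i + 1 < j" "h \<in> cells C" "s (j-1) h = h" "composable sd i h f"
  shows "eqv n C j (whisk sd i h f)"
  using assms
proof (induction j arbitrary: f rule: inc_induct)
  case base
  then show ?case
    using eqv_whisk_top by blast
next
  case (step m)
  define p where "p = m - 1"
  have m: "i < p" "p < m" "m < n" "p < n" "1 \<le> m"
    using step.hyps step.prems(2) p_def by auto
  obtain g where g: "g \<in> cells C" "s m g = g" "s p g = t p f" "t p g = s p f"
    "equivalent m (c p g f) (t p f)" "equivalent m (c p f g) (s p f)"
    using step.prems(1) eqv_below_top[OF m(3)] p_def by blast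
  have f: "f \<in> cells C" "s m f = f"
    using step.prems(1) eqv_in_cells eqv_src_fixed m(3) by blast+
  have h: "s p h = h" "s m h = h"
    using step.prems(3,4) bdry_fixed_mono[of p h m] m p_def by auto
  have hg: "composable sd i h g"
    using composable_via_bdry[OF m(1,4) f(1) g(1,3) step.prems(5)] .
  have hgf: "composable sd i h (c p g f)" "composable sd i h (c p f g)"
    using face_comp_higher(1)[OF m(1,4) g(1) f(1) g(4), of "flip sd"]
      face_comp_higher(1)[OF m(1,4) f(1) g(1) g(3)[symmetric], of "flip sd"] hg step.prems(5)
    by simp_all
  let ?W = "whisk sd i h"
  have IH: "equivalent m (?W a) (?W b)" if "composable sd i h a" "equivalent m a b" for a b
    using equivalent_whisk_if_eqv_whisk[of m sd i h a b] step.IH step.prems(3) h that m by simp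
  have W: "?W (c p g f) = c p (?W g) (?W f)" "?W (c p f g) = c p (?W f) (?W g)"
    by (rule whisk_comp_higher; use m f g h hg step.prems(3,5) in simp)+
  have B: "s p (?W f) = ?W (s p f)" "t p (?W f) = ?W (t p f)"
    "s p (?W g) = ?W (s p g)" "t p (?W g) = ?W (t p g)"
    "s m (?W f) = ?W (s m f)" "s m (?W g) = ?W (s m g)"
    by (rule bdry_whisk_higher; use m f g h hg step.prems(3,5) in simp)+
  have "?W g \<in> cells C" "s m (?W g) = ?W g" "s p (?W g) = t p (?W f)" "t p (?W g) = s p (?W f)"
    "equivalent m (c p (?W g) (?W f)) (t p (?W f))" "equivalent m (c p (?W f) (?W g)) (s p (?W f))"
    using W B g IH[OF hgf(1) g(5)] IH[OF hgf(2) g(6)] m hg step.prems(3) by simp_all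
  moreover have "?W f \<in> cells C" "s m (?W f) = ?W f"
    using B f m step.prems(3,5) by simp_all
  ultimately show ?case
    unfolding eqv_below_top[OF m(3)] p_def[symmetric] using m by blast
qed

lemma equivalent_whisk:
  assumes "i < k" "k < n" "h \<in> cells C" "s k h = h" "composable sd i h a" "equivalent k a b"
  shows "equivalent k (whisk sd i h a) (whisk sd i h b)"
  using equivalent_whisk_if_eqv_whisk[OF _ assms] eqv_whisk[of "Suc k" _ i h sd] assms(1-4) by simp

lemma equivalent_whisk_left:
  "i < k \<Longrightarrow> k < n \<Longrightarrow> h \<in> cells C \<Longrightarrow> s k h = h \<Longrightarrow> t i h = s i a \<Longrightarrow> equivalent k a b \<Longrightarrow>
   equivalent k (c i h a) (c i h b)"
  using equivalent_whisk[of i k h Left a b] by (simp add: whisk_def face_def)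

lemma equivalent_whisk_right:
  "i < k \<Longrightarrow> k < n \<Longrightarrow> h \<in> cells C \<Longrightarrow> s k h = h \<Longrightarrow> t i a = s i h \<Longrightarrow> equivalent k a b \<Longrightarrow>
   equivalent k (c i a h) (c i b h)"
  using equivalent_whisk[of i k h Right a b] by (simp add: whisk_def face_def)

lemma equivalent_trans_if_eqv_comp:
  assumes "\<And>e e'. eqv n C (Suc k) e \<Longrightarrow> eqv n C (Suc k) e' \<Longrightarrow> t k e = s k e' \<Longrightarrow>
      eqv n C (Suc k) (c k e e')"
    and "equivalent k a b" "equivalent k b b'"
  shows "equivalent k a b'"
proof -
  obtain e e' where e: "eqv n C (Suc k) e" "e \<in> cells C" "s k e = a" "t k e = b" "k < n"
    and e': "eqv n C (Suc k) e'" "e' \<in> cells C" "s k e' = b" "t k e' = b'"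
    using assms(2,3) by (elim equivalentE)
  then show ?thesis
    unfolding equivalent_def using assms(1)[of e e'] by (intro exI[of _ "c k e e'"]) simp
qed

lemma eqv_comp_top:
  assumes "eqv n C n f" "eqv n C n f'" "t (n-1) f = s (n-1) f'"
  shows "eqv n C n (c (n-1) f f')"
proof -
  define p where "p = n - 1"
  obtain g where g: "g \<in> cells C" "s p g = t p f" "t p g = s p f" "c p f g = s p f" "c p g f = t p f"
    using assms(1)[unfolded eqv_top] unfolding p_def by blast
  obtain g' where g': "g' \<in> cells C" "s p g' = t p f'" "t p g' = s p f'"
    "c p f' g' = s p f'" "c p g' f' = t p f'"
    using assms(2)[unfolded eqv_top] unfolding p_def by blast
  have f: "f \<in> cells C" "f' \<in> cells C" "t p f = s p f'" "1 \<le> n" "p < n"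
    using assms eqv_top p_def by auto
  have "c p (c p f f') (c p g' g) = c p (c p f (c p f' g')) g"
    using f g(1-3) g'(1-3) by (simp add: assoc)
  also have "\<dots> = s p (c p f f')"
    using f g g' by simp
  finally have inv1: "c p (c p f f') (c p g' g) = s p (c p f f')" .
  have "c p (c p g' g) (c p f f') = c p (c p g' (c p g f)) f'"
    using f g(1-3) g'(1-3) by (simp add: assoc)
  also have "\<dots> = t p (c p f f')"
    using f g g' by simp
  finally have inv2: "c p (c p g' g) (c p f f') = t p (c p f f')" .
  show ?thesis
    unfolding eqv_top p_def[symmetric] using f g(1-3) g'(1-3) inv1 inv2
    by (intro conjI exI[of _ "c p g' g"]) simp_all
qed

lemma eqv_comp:
  assumes "j \<le> n" "eqv n C j f" "eqv n C j f'" "t (j-1) f = s (j-1) f'"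
  shows "eqv n C j (c (j-1) f f')"
  using assms
proof (induction j arbitrary: f f' rule: inc_induct)
  case base
  then show ?case
    using eqv_comp_top by blast
next
  case (step m)
  define p where "p = m - 1"
  have m: "p < m" "m < n" "p < n" "1 \<le> m"
    using step.hyps eqv_dim[OF step.prems(1)] p_def by auto
  have trans: "equivalent m a b'" if "equivalent m a b" "equivalent m b b'" for a b b'
    using equivalent_trans_if_eqv_comp[of m a b b'] step.IH that by simp
  obtain g where g: "g \<in> cells C" "s m g = g" "s p g = t p f" "t p g = s p f"
    "equivalent m (c p g f) (t p f)" "equivalent m (c p f g) (s p f)"
    using step.prems(1) eqv_below_top[OF m(2)] p_def by blast
  obtain g' where g': "g' \<in> cells C" "s m g' = g'" "s p g' = t p f'" "t p g' = s p f'"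
    "equivalent m (c p g' f') (t p f')" "equivalent m (c p f' g') (s p f')"
    using step.prems(2) eqv_below_top[OF m(2)] p_def by blast
  have f: "f \<in> cells C" "f' \<in> cells C" "s m f = f" "s m f' = f'" "t p f = s p f'"
    using step.prems eqv_in_cells eqv_src_fixed m(2) p_def by auto
  have "equivalent m (c p (c p g f) f') (c p (t p f) f')"
    using g f m by (intro equivalent_whisk_right) simp_all
  then have "equivalent m (c p g' (c p (c p g f) f')) (c p g' f')"
    using g g' f m by (intro equivalent_whisk_left) simp_all
  moreover have "c p (c p g' g) (c p f f') = c p g' (c p (c p g f) f')"
    using f g(1-4) g'(1-4) m by (simp add: assoc)
  ultimately have "equivalent m (c p (c p g' g) (c p f f')) (c p g' f')"
    by simp
  then have inv1: "equivalent m (c p (c p g' g) (c p f f')) (t p (c p f f'))"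
    using trans[OF _ g'(5)] f m by simp
  have "equivalent m (c p f (c p f' g')) (c p f (s p f'))"
    using g' f m by (intro equivalent_whisk_left) simp_all
  then have "equivalent m (c p (c p f (c p f' g')) g) (c p f g)"
    using g g' f m by (intro equivalent_whisk_right) simp_all
  moreover have "c p (c p f f') (c p g' g) = c p (c p f (c p f' g')) g"
    using f g(1-4) g'(1-4) m by (simp add: assoc)
  ultimately have "equivalent m (c p (c p f f') (c p g' g)) (c p f g)"
    by simp
  then have inv2: "equivalent m (c p (c p f f') (c p g' g)) (s p (c p f f'))"
    using trans[OF _ g(6)] f m by simp
  show ?case
    unfolding eqv_below_top[OF m(2)] p_def[symmetric] using f g g' m inv1 inv2
    by (intro conjI exI[of _ "c p g' g"]) simp_all
qed

lemma equivalent_trans: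
  assumes "equivalent k a b" "equivalent k b b'"
  shows "equivalent k a b'"
proof (rule equivalent_trans_if_eqv_comp[OF _ assms])
  fix e e'
  assume "eqv n C (Suc k) e" "eqv n C (Suc k) e'" "t k e = s k e'"
  then show "eqv n C (Suc k) (c k e e')"
    using eqv_comp[of "Suc k" e e'] eqv_dim by simp
qed

lemma equivalent_hcomp:
  assumes "i < k" "equivalent k u v" "equivalent k u' v'" "t i u = s i u'"
  shows "equivalent k (c i u u') (c i v v')"
proof -
  obtain e e' where e: "eqv n C (Suc k) e" "e \<in> cells C" "s k e = u" "t k e = v" "k < n"
    and e': "eqv n C (Suc k) e'" "e' \<in> cells C" "s k e' = u'" "t k e' = v'"
    using assms(2,3) by (elim equivalentE)
  have "equivalent k (c i u u') (c i v u')"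
    using assms e e' by (intro equivalent_whisk_right) auto
  moreover have "equivalent k (c i v u') (c i v v')"
    using assms e e' by (intro equivalent_whisk_left) auto
  ultimately show ?thesis
    using equivalent_trans by blast
qed

section \<open>Hom categories\<close>

abbreviation Hom :: "nat \<Rightarrow> 'a \<Rightarrow> 'a \<Rightarrow> 'a set" where
  "Hom k x y \<equiv> cells (hom C k x y)"

lemma Hom_iff: "a \<in> Hom k x y \<longleftrightarrow> a \<in> cells C \<and> s (k-1) a = x \<and> t (k-1) a = y"
  by (simp add: hom_def)

lemma Hom_lower_bdry:
  assumes "a \<in> Hom k x y" "i < k" "k \<le> n"
  shows "s i a = s i x" "t i a = t i y"
proof -
  have a: "a \<in> cells C" "x = s (k-1) a" "y = t (k-1) a"
    using assms(1) Hom_iff by auto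
  show "s i a = s i x" "t i a = t i y"
    using a assms(2,3) by (cases "i = k - 1"; simp)+
qed

lemma parallel_cells:
  assumes "parallel n C k x y" "1 \<le> k" "k \<le> n"
  shows "x \<in> cells C" "y \<in> cells C" "s (k-1) x = x" "s (k-1) y = y"
  using assms by (auto simp: parallel_def is_cell_def)

lemma parallel_lower_bdry:
  assumes "parallel n C k x y" "i + 1 < k" "k \<le> n"
  shows "s i x = s i y" "t i x = t i y"
proof -
  have xy: "x \<in> cells C" "y \<in> cells C" "s (k-2) x = s (k-2) y" "t (k-2) x = t (k-2) y"
    using assms by (auto simp: parallel_def is_cell_def)
  have "s i x = s i y \<and> t i x = t i y"
  proof (cases "i = k - 2")
    case False
    then have "i < k - 2" "k - 2 < n"
      using assms(2,3) by auto
    then show ?thesis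
      using xy src_src_lower[of i "k-2"] tgt_tgt_lower[of i "k-2"] by metis
  qed (use xy in simp)
  then show "s i x = s i y" "t i x = t i y"
    by simp_all
qed

definition whisk_dom :: "side \<Rightarrow> nat \<Rightarrow> 'a \<Rightarrow> nat \<Rightarrow> 'a \<Rightarrow> 'a \<Rightarrow> bool" where
  "whisk_dom sd i h k x y \<longleftrightarrow>
     parallel n C k x y \<and> composable sd i h (case sd of Left \<Rightarrow> x | Right \<Rightarrow> y)"

definition whisk_src :: "side \<Rightarrow> nat \<Rightarrow> 'a \<Rightarrow> nat \<Rightarrow> 'a \<Rightarrow> 'a" where
  "whisk_src sd i h k x =
     (if i + 1 < k then whisk sd i h x else case sd of Left \<Rightarrow> s i h | Right \<Rightarrow> x)"

definition whisk_tgt :: "side \<Rightarrow> nat \<Rightarrow> 'a \<Rightarrow> nat \<Rightarrow> 'a \<Rightarrow> 'a" where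
  "whisk_tgt sd i h k y =
     (if i + 1 < k then whisk sd i h y else case sd of Left \<Rightarrow> y | Right \<Rightarrow> t i h)"

lemma whisk_dom_composable:
  assumes "whisk_dom sd i h k x y" "a \<in> Hom k x y" "i < k" "k \<le> n"
  shows "composable sd i h a"
  using assms Hom_lower_bdry[OF assms(2)]
  by (cases sd) (auto simp: whisk_dom_def face_def)

lemma whisk_dom_composable_ends:
  assumes "whisk_dom sd i h k x y" "i + 1 < k" "k \<le> n"
  shows "composable sd i h x" "composable sd i h y"
  using assms parallel_lower_bdry[of k x y i]
  by (cases sd; auto simp: whisk_dom_def face_def)+

lemma whisk_in_Hom:
  assumes "whisk_dom sd i h k x y" "is_cell n C (Suc i) h" "a \<in> Hom k x y" "i < k" "k \<le> n"
  shows "whisk sd i h a \<in> Hom k (whisk_src sd i h k x) (whisk_tgt sd i h k y)"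
proof -
  have comp: "composable sd i h a"
    using whisk_dom_composable assms(1,3-5) .
  have a: "a \<in> cells C" "s (k-1) a = x" "t (k-1) a = y" and h: "h \<in> cells C"
    using assms(2,3) by (auto simp: Hom_iff is_cell_def)
  show ?thesis
  proof (cases "i + 1 < k")
    case True
    then have "s (k-1) h = h"
      using assms(2,5) bdry_fixed_mono[of "Suc i" h "k-1"] by (auto simp: is_cell_def)
    then have "s (k-1) (whisk sd i h a) = whisk sd i h x" "t (k-1) (whisk sd i h a) = whisk sd i h y"
      using bdry_whisk_higher[of i "k-1" h a sd] True assms(5) a h comp by auto
    then show ?thesis
      using True a h comp assms(4,5) by (simp add: Hom_iff whisk_src_def whisk_tgt_def)
  next
    case False
    then have "k - 1 = i"
      using assms(4) by simp
    then show ?thesis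
      using a h comp assms(4,5)
      by (cases sd) (auto simp: Hom_iff whisk_src_def whisk_tgt_def whisk_def face_def)
  qed
qed

lemma whisk_dom_whisk_parallel:
  assumes "whisk_dom sd i h k x y" "is_cell n C (Suc i) h" "i + 1 < k" "k \<le> n"
  shows "parallel n C k (whisk sd i h x) (whisk sd i h y)"
proof -
  have comp: "composable sd i h x" "composable sd i h y"
    using whisk_dom_composable_ends assms(1,3,4) by blast+
  have xy: "x \<in> cells C" "y \<in> cells C" "s (k-1) x = x" "s (k-1) y = y"
    using parallel_cells[of k x y] assms whisk_dom_def by auto
  have h: "h \<in> cells C" "s (k-1) h = h"
    using assms(2-4) bdry_fixed_mono[of "Suc i" h] by (auto simp: is_cell_def)
  let ?W = "whisk sd i h"
  have W: "s (k-1) (?W x) = ?W x" "s (k-1) (?W y) = ?W y"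
    using bdry_whisk_higher[of i "k-1" h _ sd] assms(3,4) xy h comp by auto
  have "s (k-2) (?W x) = s (k-2) (?W y) \<and> t (k-2) (?W x) = t (k-2) (?W y)"
  proof (cases "i + 2 < k")
    case True
    then have "s (k-2) h = h"
      using assms(2,4) bdry_fixed_mono[of "Suc i" h] by (auto simp: is_cell_def)
    then show ?thesis
      using True bdry_whisk_higher[of i "k-2" h _ sd] parallel_lower_bdry[of k x y "k-2"]
        assms xy h comp whisk_dom_def by auto
  next
    case False
    then have "k - 2 = i"
      using assms(3) by simp
    then show ?thesis
      using parallel_lower_bdry[of k x y i] assms xy h comp
      by (cases sd) (auto simp: whisk_dom_def whisk_def face_def)
  qed
  then show ?thesis
    using W xy h comp assms(3,4) by (auto simp: parallel_def is_cell_def)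
qed

lemma whisk_dom_whisk_cell:
  assumes "whisk_dom sd i h k x y" "i < n" "g \<in> cells C" "h \<in> cells C" "composable sd i g h"
  shows "whisk_dom sd i (whisk sd i g h) k x y"
  using assms face_whisk(1)[of i g h sd] unfolding whisk_dom_def by simp

lemma whisk_dom_parallel_pairs:
  assumes "whisk_dom sd i h k a a'" "i + 1 < k" "k \<le> n"
  shows "whisk_dom sd i h k a' a" "whisk_dom sd i h k a a" "whisk_dom sd i h k a' a'"
proof -
  have "parallel n C k a a'"
    using assms(1) whisk_dom_def by blast
  then have "parallel n C k a' a" "parallel n C k a a" "parallel n C k a' a'"
    by (auto simp: parallel_def)
  then show "whisk_dom sd i h k a' a" "whisk_dom sd i h k a a" "whisk_dom sd i h k a' a'"
    using whisk_dom_composable_ends[OF assms] by (cases sd; simp add: whisk_dom_def)+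
qed

lemma whisk_dom_Hom:
  assumes "whisk_dom sd i h k x y" "a \<in> Hom k x y" "b \<in> Hom k x y" "s k a = a" "s k b = b"
    and "i < k" "k < n"
  shows "whisk_dom sd i h (Suc k) a b"
proof -
  have "parallel n C (Suc k) a b"
    using assms(2-5) by (simp add: parallel_def is_cell_def Hom_iff)
  moreover have "composable sd i h a" "composable sd i h b"
    using whisk_dom_composable[OF assms(1,2)] whisk_dom_composable[OF assms(1,3)] assms(6,7)
    by simp_all
  ultimately show ?thesis
    by (cases sd) (simp_all add: whisk_dom_def)
qed

section \<open>Whiskering by an equivalence\<close>

definition whisk_ess_surj :: "side \<Rightarrow> nat \<Rightarrow> 'a \<Rightarrow> nat \<Rightarrow> bool" where
  "whisk_ess_surj sd i h k \<longleftrightarrow> (\<forall>x y b. whisk_dom sd i h k x y \<longrightarrow>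
     b \<in> Hom k (whisk_src sd i h k x) (whisk_tgt sd i h k y) \<longrightarrow> s k b = b \<longrightarrow>
     (\<exists>a \<in> Hom k x y. s k a = a \<and> equivalent k (whisk sd i h a) b))"

definition whisk_bij :: "side \<Rightarrow> nat \<Rightarrow> 'a \<Rightarrow> bool" where
  "whisk_bij sd i h \<longleftrightarrow> (\<forall>x y. whisk_dom sd i h n x y \<longrightarrow>
     bij_betw (whisk sd i h) (Hom n x y) (Hom n (whisk_src sd i h n x) (whisk_tgt sd i h n y)))"

lemma whisk_bij_inverse:
  assumes h: "is_cell n C (Suc i) h" and bij: "whisk_bij sd i h" and i: "i + 1 < n"
    and d: "whisk_dom sd i h n x x'" and u: "u \<in> Hom n x x'" "u' \<in> Hom n x' x"
    and uu: "c (n-1) (whisk sd i h u) (whisk sd i h u') = whisk sd i h x"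
  shows "c (n-1) u u' = x"
proof -
  define p where "p = n - 1"
  have p: "i < p" "p < n" "s p h = h" "h \<in> cells C"
    using h i bdry_fixed_mono[of "Suc i" h p] unfolding p_def by (auto simp: is_cell_def)
  note dd = whisk_dom_parallel_pairs[OF d i order.refl]
  have uc: "u \<in> cells C" "u' \<in> cells C" "s p u = x" "t p u = x'" "s p u' = x'" "t p u' = x"
    using u unfolding p_def by (simp_all add: Hom_iff)
  have x: "s p x = x" "t p x = x" "x \<in> cells C"
    using parallel_cells[of n x x'] d p(2) tgt_fixed_if_src_fixed[OF p(2)] unfolding whisk_dom_def p_def
    by auto
  have "composable sd i h u"
    using whisk_dom_composable[OF d u(1)] p unfolding p_def by simp
  then have "whisk sd i h (c p u u') = whisk sd i h x"
    using whisk_comp_higher[OF p(1,2,4,3) uc(1,2)] uc uu unfolding p_def by simp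
  moreover have "c p u u' \<in> Hom n x x" "x \<in> Hom n x x"
    using uc x p unfolding p_def by (simp_all add: Hom_iff)
  moreover have "inj_on (whisk sd i h) (Hom n x x)"
    using bij dd(2) unfolding whisk_bij_def bij_betw_def by blast
  ultimately show ?thesis
    unfolding p_def by (blast dest: inj_onD)
qed

lemma whisk_reflects_equivalent_top:
  assumes h: "is_cell n C (Suc i) h" and bij: "whisk_bij sd i h"
    and i: "i + 1 < n" and d: "whisk_dom sd i h n a a'"
    and eq: "equivalent (n-1) (whisk sd i h a) (whisk sd i h a')"
  shows "equivalent (n-1) a a'"
proof -
  define p where "p = n - 1"
  let ?W = "whisk sd i h"
  have p: "Suc p = n"
    using i p_def by auto
  obtain ep where ep: "eqv n C n ep" "ep \<in> cells C" "s p ep = ?W a" "t p ep = ?W a'"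
    using eq p unfolding p_def[symmetric] by (elim equivalentE) simp
  obtain ep' where ep': "ep' \<in> cells C" "s p ep' = t p ep" "t p ep' = s p ep"
    "c p ep ep' = s p ep" "c p ep' ep = t p ep"
    using ep(1)[unfolded eqv_top] unfolding p_def by blast
  note d' = whisk_dom_parallel_pairs(1)[OF d i order.refl]
  have "?W ` Hom n u v = Hom n (?W u) (?W v)" if "whisk_dom sd i h n u v" for u v
    using bij that i unfolding whisk_bij_def whisk_src_def whisk_tgt_def bij_betw_def by auto
  moreover have "ep \<in> Hom n (?W a) (?W a')" "ep' \<in> Hom n (?W a') (?W a)"
    using ep ep' unfolding p_def by (simp_all add: Hom_iff)
  ultimately obtain e e' where e: "e \<in> Hom n a a'" "?W e = ep" and e': "e' \<in> Hom n a' a" "?W e' = ep'"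
    using d d' by (metis imageE)
  have "c p e e' = a" "c p e' e = a'"
    using whisk_bij_inverse[OF h bij i d e(1) e'(1)] whisk_bij_inverse[OF h bij i d' e'(1) e(1)]
      e(2) e'(2) ep ep' unfolding p_def by simp_all
  then have "eqv n C n e"
    unfolding eqv_top p_def[symmetric] using e e' p by (auto simp: Hom_iff p_def)
  then show ?thesis
    unfolding equivalent_def p_def[symmetric] p using e(1) by (auto simp: Hom_iff p_def)
qed

lemma whisk_comp_equivalent:
  assumes "i < m" "m < n" "h \<in> cells C" "s m h = h" "u \<in> cells C" "u' \<in> cells C" "t m u = s m u'"
    and "composable sd i h u" "composable sd i h u'"
    and "equivalent (Suc m) (whisk sd i h u) v" "equivalent (Suc m) (whisk sd i h u') v'"
  shows "equivalent (Suc m) (whisk sd i h (c m u u')) (c m v v')"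
proof -
  have "whisk sd i h (c m u u') = c m (whisk sd i h u) (whisk sd i h u')"
    using whisk_comp_higher[OF assms(1-7,8)] .
  moreover have "t m (whisk sd i h u) = s m (whisk sd i h u')"
    using bdry_whisk_higher[OF assms(1-4)] assms(5-9) by simp
  ultimately show ?thesis
    using equivalent_hcomp[of m "Suc m"] assms(10,11) by simp
qed

lemma whisk_reflects_inverse:
  assumes h: "is_cell n C (Suc i) h"
    and IH: "\<And>a a'. whisk_dom sd i h (Suc (Suc m)) a a' \<Longrightarrow>
      equivalent (Suc m) (whisk sd i h a) (whisk sd i h a') \<Longrightarrow> equivalent (Suc m) a a'"
    and m: "i < m" "Suc m < n"
    and d: "whisk_dom sd i h (Suc m) x x'"
    and u: "u \<in> Hom (Suc m) x x'" "u' \<in> Hom (Suc m) x' x" "s (Suc m) u = u" "s (Suc m) u' = u'"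
    and v: "equivalent (Suc m) (whisk sd i h u) v" "equivalent (Suc m) (whisk sd i h u') v'"
      "equivalent (Suc m) (c m v v') (whisk sd i h x)"
  shows "equivalent (Suc m) (c m u u') x"
proof -
  have hc: "h \<in> cells C" "s m h = h"
    using h m bdry_fixed_mono[of "Suc i" h] by (auto simp: is_cell_def)
  note dd = whisk_dom_parallel_pairs[OF d _ less_imp_le[OF m(2)]]
  have x: "x \<in> cells C" "s m x = x" "t m x = x"
    using parallel_cells[of "Suc m" x x'] d m tgt_fixed_if_src_fixed[of m x] unfolding whisk_dom_def
    by auto
  have uc: "u \<in> cells C" "u' \<in> cells C" "s m u = x" "t m u = x'" "s m u' = x'" "t m u' = x"
    using u by (simp_all add: Hom_iff)
  have "composable sd i h u" "composable sd i h u'"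
    using whisk_dom_composable[OF d u(1)] whisk_dom_composable[OF dd(1) u(2)] m by auto
  then have "equivalent (Suc m) (whisk sd i h (c m u u')) (whisk sd i h x)"
    using whisk_comp_equivalent[OF m(1) _ hc uc(1,2) _ _ _ v(1,2)] equivalent_trans v(3) uc m
    by simp
  moreover have "whisk_dom sd i h (Suc (Suc m)) (c m u u') x"
    using x uc u(3,4) m bdry_fixed_mono[OF x(2)]
    by (intro whisk_dom_Hom[OF dd(2)]) (simp_all add: Hom_iff)
  ultimately show ?thesis
    using IH by blast
qed

lemma whisk_reflects_equivalent_step:
  assumes h: "is_cell n C (Suc i) h" and es: "whisk_ess_surj sd i h (Suc m)"
    and IH: "\<And>a a'. whisk_dom sd i h (Suc (Suc m)) a a' \<Longrightarrow>
      equivalent (Suc m) (whisk sd i h a) (whisk sd i h a') \<Longrightarrow> equivalent (Suc m) a a'"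
    and m: "i < m" "Suc m < n"
    and d: "whisk_dom sd i h (Suc m) a a'"
    and eq: "equivalent m (whisk sd i h a) (whisk sd i h a')"
  shows "equivalent m a a'"
proof -
  let ?W = "whisk sd i h"
  have d': "whisk_dom sd i h (Suc m) a' a"
    using whisk_dom_parallel_pairs(1)[OF d] m by simp
  obtain ep where ep: "eqv n C (Suc m) ep" "ep \<in> cells C" "s m ep = ?W a" "t m ep = ?W a'"
    using eq by (elim equivalentE)
  obtain ep' where ep': "eqv n C (Suc m) ep'" "s m ep' = ?W a'" "t m ep' = ?W a"
    "equivalent (Suc m) (c m ep' ep) (?W a')" "equivalent (Suc m) (c m ep ep') (?W a)"
    using eqv_inverse[OF ep(1) m(2)] ep by auto
  have lift: "\<exists>u \<in> Hom (Suc m) x x'. s (Suc m) u = u \<and> equivalent (Suc m) (?W u) v"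
    if "whisk_dom sd i h (Suc m) x x'" "eqv n C (Suc m) v" "s m v = ?W x" "t m v = ?W x'" for x x' v
    using es that m eqv_in_cells[OF that(2)] eqv_src_fixed[OF that(2)]
    unfolding whisk_ess_surj_def whisk_src_def whisk_tgt_def by (auto simp: Hom_iff)
  obtain e e' where e: "e \<in> Hom (Suc m) a a'" "s (Suc m) e = e" "equivalent (Suc m) (?W e) ep"
    and e': "e' \<in> Hom (Suc m) a' a" "s (Suc m) e' = e'" "equivalent (Suc m) (?W e') ep'"
    using lift[OF d ep(1,3,4)] lift[OF d' ep'(1,2,3)] by auto
  have "equivalent (Suc m) (c m e e') a" "equivalent (Suc m) (c m e' e) a'"
    using whisk_reflects_inverse[OF h IH m d e(1) e'(1) e(2) e'(2) e(3) e'(3) ep'(5)]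
      whisk_reflects_inverse[OF h IH m d' e'(1) e(1) e'(2) e(2) e'(3) e(3) ep'(4)] by simp_all
  then have "eqv n C (Suc m) e"
    unfolding eqv_below_top[OF m(2)] using e(1,2) e'(1,2) m by (auto simp: Hom_iff)
  then show ?thesis
    unfolding equivalent_def using e(1) by (auto simp: Hom_iff)
qed

lemma whisk_reflects_equivalent:
  assumes h: "is_cell n C (Suc i) h"
    and es: "\<And>k. i < k \<Longrightarrow> k < n \<Longrightarrow> whisk_ess_surj sd i h k"
    and bij: "whisk_bij sd i h"
    and m: "i < m" "m < n"
    and d: "whisk_dom sd i h (Suc m) a a'"
    and eq: "equivalent m (whisk sd i h a) (whisk sd i h a')"
  shows "equivalent m a a'"
proof -
  have "m \<le> n - 1"
    using m by simp
  then show ?thesis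
    using m(1) d eq
  proof (induction m arbitrary: a a' rule: inc_induct)
    case base
    then show ?case
      using whisk_reflects_equivalent_top[OF h bij] by simp
  next
    case (step m)
    then show ?case
      using whisk_reflects_equivalent_step[OF h es] by simp
  qed
qed

lemma eqv_inverse_whisk:
  assumes "eqv n C l h" "l < n" "l = Suc i"
  obtains g \<gamma> \<gamma>' where "g \<in> cells C" "s l g = g" "composable sd i g h" "composable sd i h g"
    "eqv n C (Suc l) \<gamma>" "s l \<gamma> = whisk sd i g h" "t l \<gamma> = face sd i h"
    "eqv n C (Suc l) \<gamma>'" "s l \<gamma>' = whisk sd i h g" "t l \<gamma>' = face sd i g"
proof -
  obtain g where g: "g \<in> cells C" "s l g = g" "s i g = t i h" "t i g = s i h"
    "equivalent l (c i g h) (t i h)" "equivalent l (c i h g) (s i h)"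
    using assms eqv_below_top[of l h] by auto
  then have "equivalent l (whisk sd i g h) (face sd i h)" "equivalent l (whisk sd i h g) (face sd i g)"
    "composable sd i g h" "composable sd i h g"
    by (cases sd; simp add: whisk_def face_def)+
  then show thesis
    using that[of g] g(1,2) unfolding equivalent_def by blast
qed

lemma whisk_dom_whisk:
  assumes "whisk_dom sd i h k x y" "is_cell n C (Suc i) h" "i + 1 < k" "k \<le> n"
    and "g \<in> cells C" "composable sd i g h"
  shows "whisk_dom sd i g k (whisk sd i h x) (whisk sd i h y)"
proof -
  have c: "x \<in> cells C" "y \<in> cells C" "h \<in> cells C" "i < n"
    using assms(1-4) parallel_cells[of k x y] by (auto simp: whisk_dom_def is_cell_def)
  note ends = whisk_dom_composable_ends[OF assms(1,3,4)]
  have "composable sd i g (whisk sd i h x)" "composable sd i g (whisk sd i h y)"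
    using composable_whisk[OF c(4,3,1) ends(1) assms(6)] composable_whisk[OF c(4,3,2) ends(2) assms(6)]
    by simp_all
  then show ?thesis
    using whisk_dom_whisk_parallel[OF assms(1-4)] by (cases sd) (simp_all add: whisk_dom_def)
qed

lemma whisk_bij_top:
  assumes "eqv n C n h"
  shows "whisk_bij sd (n-1) h"
  unfolding whisk_bij_def
proof (intro allI impI)
  fix x y
  assume d: "whisk_dom sd (n-1) h n x y"
  define p where "p = n - 1"
  have p: "p < n" "\<not> p + 1 < n" "Suc p = n"
    using eqv_dim[OF assms] p_def by auto
  obtain g where g: "g \<in> cells C" "s p g = t p h" "t p g = s p h" "c p h g = s p h" "c p g h = t p h"
    using assms[unfolded eqv_top] unfolding p_def by blast
  have hc: "h \<in> cells C"
    using assms eqv_in_cells by blast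
  have xy: "x \<in> cells C" "y \<in> cells C" "s p x = x" "s p y = y" "t p x = x" "t p y = y"
    using parallel_cells[of n x y] d p tgt_fixed_if_src_fixed[OF p(1)] unfolding whisk_dom_def p_def
    by auto
  have gh: "composable sd p g h" "composable sd p h g"
    "whisk sd p g h = face sd p h" "whisk sd p h g = face sd p g"
    using g by (cases sd; simp add: whisk_def face_def)+
  have Hom_n: "f \<in> Hom n u v \<longleftrightarrow> f \<in> cells C \<and> s p f = u \<and> t p f = v" for f u v
    unfolding p_def by (simp add: Hom_iff)
  let ?B = "Hom n (whisk_src sd p h n x) (whisk_tgt sd p h n y)"
  show "bij_betw (whisk sd p h) (Hom n x y) ?B"
  proof (rule bij_betw_byWitness[where f' = "whisk sd p g"])
    show "\<forall>a \<in> Hom n x y. whisk sd p g (whisk sd p h a) = a"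
      using whisk_dom_composable[OF d[folded p_def]] gh g hc p whisk_assoc[of p g h _ sd]
      by (auto simp: Hom_n)
    have "composable sd p g b" if "b \<in> ?B" for b
      using that d g p unfolding whisk_dom_def whisk_src_def whisk_tgt_def p_def[symmetric]
      by (cases sd) (simp_all add: Hom_n face_def)
    then show "\<forall>b \<in> ?B. whisk sd p h (whisk sd p g b) = b"
      using gh g hc p whisk_assoc[of p h g _ sd] by (auto simp: Hom_n)
    show "whisk sd p h ` Hom n x y \<subseteq> ?B"
      using whisk_in_Hom[OF d[folded p_def]] assms p hc unfolding p_def by (auto simp: is_cell_def)
    show "whisk sd p g ` ?B \<subseteq> Hom n x y"
      using d g hc p(1,2) xy unfolding whisk_dom_def whisk_src_def whisk_tgt_def p_def[symmetric]
      by (cases sd) (auto simp: Hom_n whisk_def face_def)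
  qed
qed

lemma whisk_ess_surj_base:
  assumes h: "eqv n C l h" and l: "l < n" "l = Suc i"
  shows "whisk_ess_surj sd i h l"
  unfolding whisk_ess_surj_def
proof (intro allI impI)
  fix x y b
  assume d: "whisk_dom sd i h l x y"
    and b: "b \<in> Hom l (whisk_src sd i h l x) (whisk_tgt sd i h l y)" and sb: "s l b = b"
  obtain g \<gamma>' where g: "g \<in> cells C" "s l g = g" "composable sd i g h" "composable sd i h g"
    and \<gamma>': "eqv n C (Suc l) \<gamma>'" "s l \<gamma>' = whisk sd i h g" "t l \<gamma>' = face sd i g"
    using eqv_inverse_whisk[OF h l] by metis
  have i: "i < l" "i < n" "l - 1 = i"
    using l by auto
  have hc: "h \<in> cells C"
    using h eqv_in_cells by blast
  have xy: "s i x = x" "t i y = y" "composable sd i h (case sd of Left \<Rightarrow> x | Right \<Rightarrow> y)"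
    using d parallel_cells[of l x y] l tgt_fixed_if_src_fixed[of i y] unfolding whisk_dom_def by auto
  have bc: "b \<in> cells C" "s i b = (case sd of Left \<Rightarrow> s i h | Right \<Rightarrow> x)"
    "t i b = (case sd of Left \<Rightarrow> y | Right \<Rightarrow> t i h)"
    using b i unfolding whisk_src_def whisk_tgt_def by (auto simp: Hom_iff)
  have gb: "composable sd i g b" "composable (flip sd) i b (whisk sd i h g)"
    using g(3) bc face_whisk(1)[OF i(2) hc g(1) g(4)] by (simp_all add: face_def split: side.split)
  have "whisk sd i g b \<in> Hom l x y"
    using g bc xy i by (cases sd) (auto simp: Hom_iff whisk_def face_def)
  moreover have "s l (whisk sd i g b) = whisk sd i g b"
    using bdry_whisk_higher(1)[OF i(1) l(1) g(1,2) bc(1) gb(1)] sb by simp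
  moreover have "equivalent l (whisk sd i h (whisk sd i g b)) b"
  proof -
    have "equivalent l (whisk (flip sd) i b (whisk sd i h g)) (whisk (flip sd) i b (face sd i g))"
      using equivalent_whisk[OF i(1) l(1) bc(1) sb gb(2)] \<gamma>' unfolding equivalent_def by blast
    moreover have "whisk (flip sd) i b (face sd i g) = b"
      using gb(1) i bc g by (simp add: whisk_flip)
    ultimately show ?thesis
      using whisk_assoc[OF i(2) hc g(1) bc(1) g(4) gb(1)] by (simp add: whisk_flip)
  qed
  ultimately show "\<exists>a \<in> Hom l x y. s l a = a \<and> equivalent l (whisk sd i h a) b"
    by blast
qed

definition whisk_equivalence :: "nat \<Rightarrow> bool" where
  "whisk_equivalence l \<longleftrightarrow> (\<forall>sd h. eqv n C l h \<longrightarrow>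
     whisk_bij sd (l-1) h \<and> (\<forall>k. l \<le> k \<longrightarrow> k < n \<longrightarrow> whisk_ess_surj sd (l-1) h k))"

lemma whisk_equivalence_bij:
  "whisk_equivalence (Suc i) \<Longrightarrow> eqv n C (Suc i) h \<Longrightarrow> whisk_bij sd i h"
  unfolding whisk_equivalence_def by auto

lemma whisk_equivalence_ess_surj:
  "whisk_equivalence (Suc i) \<Longrightarrow> eqv n C (Suc i) h \<Longrightarrow> i < k \<Longrightarrow> k < n \<Longrightarrow> whisk_ess_surj sd i h k"
  unfolding whisk_equivalence_def by auto

lemma whisk_equivalence_reflects:
  assumes "whisk_equivalence (Suc i)" "eqv n C (Suc i) h" "i < m" "m < n"
    and "whisk_dom sd i h (Suc m) a a'" "equivalent m (whisk sd i h a) (whisk sd i h a')"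
  shows "equivalent m a a'"
proof (rule whisk_reflects_equivalent[OF _ _ _ assms(3-6)])
  show "is_cell n C (Suc i) h"
    using assms(2,4) eqv_in_cells eqv_src_fixed by (simp add: is_cell_def)
qed (use assms(1,2) whisk_equivalence_bij whisk_equivalence_ess_surj in auto)

text \<open>The heart of the argument: whiskering by an l-cell P that is equivalent, via an
  (l+1)-cell \<open>\<gamma>\<close>, to the identity on its face is conjugate to the identity map.  Whiskering
  \<open>\<gamma>\<close> by the l-dimensional boundaries of x and y gives equivalence (l+1)-cells A and B, and
  naturality of \<open>\<gamma>\<close> (the interchange law) reads \<open>A \<star> a = (P \<star> a) \<star> B\<close> for a in kHom(x,y).\<close>

context
  fixes l i k sd P \<gamma> x y
  assumes l: "l = Suc i" "l < k" "k \<le> n"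
    and P: "P \<in> cells C" "s l P = P"
    and \<gamma>: "eqv n C (Suc l) \<gamma>" "s l \<gamma> = P" "t l \<gamma> = face sd i P"
    and d: "whisk_dom sd i P k x y"
begin

private lemma unit_conj_basics:
  shows "i < l" "l < n" "x \<in> cells C" "y \<in> cells C" "parallel n C k x y" "\<gamma> \<in> cells C"
    and "face (flip sd) i x = face sd i P" "face (flip sd) i y = face sd i P"
    and "face sd i \<gamma> = face sd i P" "is_cell n C (Suc i) P"
proof -
  show il: "i < l" "l < n"
    using l by auto
  show "x \<in> cells C" "y \<in> cells C" "parallel n C k x y"
    using d parallel_cells[of k x y] l unfolding whisk_dom_def by auto
  show "face (flip sd) i x = face sd i P" "face (flip sd) i y = face sd i P"
    using whisk_dom_composable_ends[OF d] l by auto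
  show \<gamma>c: "\<gamma> \<in> cells C"
    using \<gamma>(1) eqv_in_cells by blast
  show "face sd i \<gamma> = face sd i P"
    using \<gamma>(3) face_tgt_higher[of i l \<gamma> sd] il \<gamma>c P by simp
  show "is_cell n C (Suc i) P"
    using P l by (simp add: is_cell_def)
qed

lemma unit_conj_eqv:
  "eqv n C (Suc l) (whisk (flip sd) i (s l x) \<gamma>)" "eqv n C (Suc l) (whisk (flip sd) i (t l y) \<gamma>)"
  using unit_conj_basics \<gamma>(1) l by (intro eqv_whisk; simp)+

lemma unit_conj_bdry:
  "s l (whisk (flip sd) i (s l x) \<gamma>) = whisk sd i P (s l x)" "t l (whisk (flip sd) i (s l x) \<gamma>) = s l x"
  "s l (whisk (flip sd) i (t l y) \<gamma>) = whisk sd i P (t l y)" "t l (whisk (flip sd) i (t l y) \<gamma>) = t l y"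
  using bdry_whisk_higher[of i l _ \<gamma> "flip sd"] unit_conj_basics \<gamma>(2,3) by (simp_all add: whisk_flip)

lemma unit_conj_natural:
  assumes "a \<in> cells C" "s l a = s l x" "t l a = t l y"
  shows "whisk Left l (whisk (flip sd) i (s l x) \<gamma>) a =
    whisk Right l (whisk (flip sd) i (t l y) \<gamma>) (whisk sd i P a)"
proof -
  note basics = unit_conj_basics
  have "face (flip sd) i a = face (flip sd) i (s l x)"
    using assms basics face_src_higher[of i l a "flip sd"] by simp
  then have a\<gamma>: "composable (flip sd) i a \<gamma>"
    using basics by simp
  have "whisk (flip sd) i a \<gamma> = c l (whisk (flip sd) i (s l x) \<gamma>) (whisk (flip sd) i a (t l \<gamma>))"
    using whisk_factor_tgt[OF basics(1,2) assms(1) basics(6) a\<gamma>] assms(2) by simp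
  also have "whisk (flip sd) i a (t l \<gamma>) = a"
    using \<gamma>(3) a\<gamma> basics assms(1) by (simp add: whisk_flip)
  finally have "whisk (flip sd) i a \<gamma> = c l (whisk (flip sd) i (s l x) \<gamma>) a" .
  moreover have "whisk (flip sd) i a \<gamma> = c l (whisk sd i P a) (whisk (flip sd) i (t l y) \<gamma>)"
    using whisk_factor_src[OF basics(1,2) assms(1) basics(6) a\<gamma>] assms(3) \<gamma>(2) by (simp add: whisk_flip)
  ultimately show ?thesis
    by (simp add: whisk_def)
qed

lemma unit_conj_whisk_dom:
  "whisk_dom Left l (whisk (flip sd) i (s l x) \<gamma>) k x y"
  "whisk_dom Right l (whisk (flip sd) i (t l y) \<gamma>) k (whisk sd i P x) (whisk sd i P y)"
proof -
  note basics = unit_conj_basics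
  show "whisk_dom Left l (whisk (flip sd) i (s l x) \<gamma>) k x y"
    using basics(5) unit_conj_bdry(2) unfolding whisk_dom_def by (simp add: face_def)
  have "t l (whisk sd i P y) = whisk sd i P (t l y)"
    using bdry_whisk_higher[of i l P y sd] basics P by simp
  then show "whisk_dom Right l (whisk (flip sd) i (t l y) \<gamma>) k (whisk sd i P x) (whisk sd i P y)"
    using whisk_dom_whisk_parallel[OF d basics(10)] l unit_conj_bdry(3) unfolding whisk_dom_def
    by (simp add: face_def)
qed

lemma unit_conj_src_tgt:
  "whisk_src Left l (whisk (flip sd) i (s l x) \<gamma>) k x =
     whisk_src Right l (whisk (flip sd) i (t l y) \<gamma>) k (whisk sd i P x) \<and>
   whisk_tgt Left l (whisk (flip sd) i (s l x) \<gamma>) k y =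
     whisk_tgt Right l (whisk (flip sd) i (t l y) \<gamma>) k (whisk sd i P y)"
proof (cases "l + 1 < k")
  case True
  then have "t l x = t l y" "s l y = s l x"
    using parallel_lower_bdry[OF unit_conj_basics(5)] l by simp_all
  then show ?thesis
    using True unit_conj_natural[of x] unit_conj_natural[of y] unit_conj_basics
    unfolding whisk_src_def whisk_tgt_def by simp
next
  case False
  then have "k - 1 = l"
    using l by simp
  then have "s l x = x" "t l y = y"
    using unit_conj_basics parallel_cells[of k x y] tgt_fixed_if_src_fixed[of l y] l by auto
  then show ?thesis
    using False unit_conj_bdry unfolding whisk_src_def whisk_tgt_def by simp
qed

context
  assumes equiv: "whisk_equivalence (Suc l)"
begin

lemma unit_whisk_bij:
  assumes "k = n"
  shows "bij_betw (whisk sd i P) (Hom n x y) (Hom n (whisk sd i P x) (whisk sd i P y))"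
proof -
  define A where "A = whisk (flip sd) i (s l x) \<gamma>"
  define B where "B = whisk (flip sd) i (t l y) \<gamma>"
  let ?T = "Hom n (whisk_src Left l A n x) (whisk_tgt Left l A n y)"
  have "bij_betw (whisk Left l A) (Hom n x y) ?T"
    using whisk_equivalence_bij[OF equiv unit_conj_eqv(1)] unit_conj_whisk_dom(1) assms
    unfolding whisk_bij_def A_def by simp
  moreover have "whisk Left l A a = (whisk Right l B \<circ> whisk sd i P) a" if "a \<in> Hom n x y" for a
    using unit_conj_natural Hom_lower_bdry[OF that] that l assms unfolding A_def B_def
    by (simp add: Hom_iff)
  ultimately have "bij_betw (whisk Right l B \<circ> whisk sd i P) (Hom n x y) ?T"
    using bij_betw_cong[where A' = ?T] by blast
  moreover have "bij_betw (whisk Right l B) (Hom n (whisk sd i P x) (whisk sd i P y)) ?T"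
    using whisk_equivalence_bij[OF equiv unit_conj_eqv(2)] unit_conj_whisk_dom(2) unit_conj_src_tgt
      assms unfolding whisk_bij_def A_def B_def by simp
  moreover have "whisk sd i P ` Hom n x y \<subseteq> Hom n (whisk sd i P x) (whisk sd i P y)"
    using whisk_in_Hom[OF d unit_conj_basics(10)] l assms unfolding whisk_src_def whisk_tgt_def
    by auto
  ultimately show ?thesis
    using bij_betw_comp_iff2 by blast
qed

lemma unit_whisk_ess_surj:
  assumes "k < n" "b \<in> Hom k (whisk sd i P x) (whisk sd i P y)" "s k b = b"
  shows "\<exists>a \<in> Hom k x y. s k a = a \<and> equivalent k (whisk sd i P a) b"
proof -
  define A where "A = whisk (flip sd) i (s l x) \<gamma>"
  define B where "B = whisk (flip sd) i (t l y) \<gamma>"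
  note dA = unit_conj_whisk_dom(1)[folded A_def] and dB = unit_conj_whisk_dom(2)[folded B_def]
  have lk: "l < k" "k \<le> n"
    using l by auto
  have B: "is_cell n C (Suc l) B" "s k B = B"
    using unit_conj_eqv(2) eqv_in_cells eqv_src_fixed assms(1) bdry_fixed_mono[of "Suc l" B k] lk
    unfolding B_def by (auto simp: is_cell_def)
  have "whisk Right l B b \<in> Hom k (whisk_src Left l A k x) (whisk_tgt Left l A k y)"
    using whisk_in_Hom[OF dB B(1) assms(2) lk] unit_conj_src_tgt unfolding A_def B_def by simp
  moreover have "s k (whisk Right l B b) = whisk Right l B b"
    using bdry_whisk_higher(1)[of l k B b Right] whisk_dom_composable[OF dB assms(2)] B assms lk
    by (simp add: is_cell_def Hom_iff)
  ultimately obtain a where a: "a \<in> Hom k x y" "s k a = a"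
    "equivalent k (whisk Left l A a) (whisk Right l B b)"
    using whisk_equivalence_ess_surj[OF equiv unit_conj_eqv(1) lk(1) assms(1), of Left] dA
    unfolding whisk_ess_surj_def A_def by blast
  have Pa: "whisk sd i P a \<in> Hom k (whisk sd i P x) (whisk sd i P y)"
    "s k (whisk sd i P a) = whisk sd i P a"
    using whisk_in_Hom[OF d unit_conj_basics(10) a(1)] bdry_whisk_higher(1)[of i k P a sd]
      whisk_dom_composable[OF d a(1)] bdry_fixed_mono[of l P k] P a assms(1) l
    unfolding whisk_src_def whisk_tgt_def by (auto simp: Hom_iff)
  have "equivalent k (whisk Right l B (whisk sd i P a)) (whisk Right l B b)"
    using a unit_conj_natural Hom_lower_bdry[OF a(1)] lk unfolding A_def B_def by (simp add: Hom_iff)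
  moreover have "whisk_dom Right l B (Suc k) (whisk sd i P a) b"
    using whisk_dom_Hom[OF dB Pa(1) assms(2) Pa(2) assms(3) lk(1) assms(1)] .
  ultimately have "equivalent k (whisk sd i P a) b"
    using whisk_equivalence_reflects[OF equiv unit_conj_eqv(2) lk(1) assms(1)] unfolding B_def
    by blast
  then show ?thesis
    using a by blast
qed

lemma unit_whisk_reflects:
  assumes "k < n" "a \<in> Hom k x y" "a' \<in> Hom k x y" "s k a = a" "s k a' = a'"
    and "equivalent k (whisk sd i P a) (whisk sd i P a')"
  shows "equivalent k a a'"
proof -
  define A where "A = whisk (flip sd) i (s l x) \<gamma>"
  define B where "B = whisk (flip sd) i (t l y) \<gamma>"
  have lk: "l < k" "k \<le> n"
    using l by auto
  have B: "B \<in> cells C" "s k B = B"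
    using unit_conj_eqv(2) eqv_in_cells eqv_src_fixed assms(1) bdry_fixed_mono[of "Suc l" B k] lk
    unfolding B_def by auto
  have "whisk sd i P a \<in> Hom k (whisk sd i P x) (whisk sd i P y)"
    using whisk_in_Hom[OF d unit_conj_basics(10) assms(2)] l
    unfolding whisk_src_def whisk_tgt_def by auto
  then have "composable Right l B (whisk sd i P a)"
    using whisk_dom_composable[OF unit_conj_whisk_dom(2)] lk unfolding B_def by blast
  then have "equivalent k (whisk Right l B (whisk sd i P a)) (whisk Right l B (whisk sd i P a'))"
    using equivalent_whisk[OF lk(1) assms(1) B] assms(6) by blast
  then have "equivalent k (whisk Left l A a) (whisk Left l A a')"
    using unit_conj_natural Hom_lower_bdry[OF assms(2)] Hom_lower_bdry[OF assms(3)] assms lk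
    unfolding A_def B_def by (simp add: Hom_iff)
  moreover have "whisk_dom Left l A (Suc k) a a'"
    using whisk_dom_Hom[OF unit_conj_whisk_dom(1) assms(2-5) lk(1) assms(1)] unfolding A_def .
  ultimately show ?thesis
    using whisk_equivalence_reflects[OF equiv unit_conj_eqv(1) lk(1) assms(1)] unfolding A_def
    by blast
qed

end

end

lemma pseudo_inverse_whisk:
  assumes equiv: "whisk_equivalence (Suc l)" and l: "l = Suc i" "l < k" "k \<le> n"
    and gh: "h \<in> cells C" "s l h = h" "g \<in> cells C" "s l g = g" "composable sd i g h"
    and \<gamma>: "eqv n C (Suc l) \<gamma>" "s l \<gamma> = whisk sd i g h" "t l \<gamma> = face sd i h"
    and d: "whisk_dom sd i h k x y"
  defines "GF \<equiv> \<lambda>a. whisk sd i g (whisk sd i h a)"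
  shows "k = n \<Longrightarrow> bij_betw GF (Hom n x y) (Hom n (GF x) (GF y))"
    and "k < n \<Longrightarrow> b \<in> Hom k (GF x) (GF y) \<Longrightarrow> s k b = b \<Longrightarrow>
      \<exists>a \<in> Hom k x y. s k a = a \<and> equivalent k (GF a) b"
    and "k < n \<Longrightarrow> a \<in> Hom k x y \<Longrightarrow> a' \<in> Hom k x y \<Longrightarrow> s k a = a \<Longrightarrow> s k a' = a' \<Longrightarrow>
      equivalent k (GF a) (GF a') \<Longrightarrow> equivalent k a a'"
proof -
  define P where "P = whisk sd i g h"
  have i: "i < l" "l < n" "i < n" "i + 1 < k"
    using l by auto
  have P: "P \<in> cells C" "s l P = P" "t l \<gamma> = face sd i P"
    using gh i \<gamma>(3) face_whisk(1)[of i g h sd] bdry_whisk_higher(1)[of i l g h sd] unfolding P_def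
    by simp_all
  have dP: "whisk_dom sd i P k x y"
    using whisk_dom_whisk_cell[OF d i(3) gh(3,1,5)] unfolding P_def .
  have GF: "GF a = whisk sd i P a" if "a \<in> cells C" "composable sd i h a" for a
    using whisk_assoc[OF i(3) gh(3,1) that(1) gh(5) that(2)] unfolding GF_def P_def .
  have GF_Hom: "GF a = whisk sd i P a" if "a \<in> Hom k x y" for a
    using GF whisk_dom_composable[OF d that] that i(4) l(3) by (simp add: Hom_iff)
  have "GF x = whisk sd i P x" "GF y = whisk sd i P y"
    using GF whisk_dom_composable_ends[OF d i(4) l(3)] d parallel_cells[of k x y] l(3) i
    unfolding whisk_dom_def by auto
  note GF_xy = this
  note unit = unit_whisk_bij[OF l P(1,2) \<gamma>(1) \<gamma>(2)[folded P_def] P(3) dP equiv]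
    unit_whisk_ess_surj[OF l P(1,2) \<gamma>(1) \<gamma>(2)[folded P_def] P(3) dP equiv]
    unit_whisk_reflects[OF l P(1,2) \<gamma>(1) \<gamma>(2)[folded P_def] P(3) dP equiv]
  show "k = n \<Longrightarrow> bij_betw GF (Hom n x y) (Hom n (GF x) (GF y))"
    using unit(1) GF_Hom bij_betw_cong[of "Hom n x y" GF "whisk sd i P"] unfolding GF_xy by simp
  show "\<exists>a \<in> Hom k x y. s k a = a \<and> equivalent k (GF a) b"
    if "k < n" "b \<in> Hom k (GF x) (GF y)" "s k b = b"
    using unit(2)[of b] that GF_Hom unfolding GF_xy by auto
  show "equivalent k a a'"
    if "k < n" "a \<in> Hom k x y" "a' \<in> Hom k x y" "s k a = a" "s k a' = a'" "equivalent k (GF a) (GF a')"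
    using unit(3)[of a a'] that GF_Hom by simp
qed

lemma whisk_bij_step:
  assumes equiv: "whisk_equivalence (Suc l)" and h: "eqv n C l h" and l: "l < n" "l = Suc i"
  shows "whisk_bij sd i h"
  unfolding whisk_bij_def
proof (intro allI impI)
  fix x y
  assume d: "whisk_dom sd i h n x y"
  obtain g \<gamma> \<gamma>' where g: "g \<in> cells C" "s l g = g" "composable sd i g h" "composable sd i h g"
    and \<gamma>: "eqv n C (Suc l) \<gamma>" "s l \<gamma> = whisk sd i g h" "t l \<gamma> = face sd i h"
    and \<gamma>': "eqv n C (Suc l) \<gamma>'" "s l \<gamma>' = whisk sd i h g" "t l \<gamma>' = face sd i g"
    using eqv_inverse_whisk[OF h l] by metis
  have hc: "h \<in> cells C" "s l h = h" "is_cell n C (Suc i) h"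
    using h l eqv_in_cells eqv_src_fixed by (auto simp: is_cell_def)
  let ?F = "whisk sd i h" and ?G = "whisk sd i g"
  have i: "i + 1 < n" "l \<le> n"
    using l by auto
  have dF: "whisk_dom sd i g n (?F x) (?F y)"
    using whisk_dom_whisk[OF d hc(3) i(1) order.refl g(1,3)] .
  have imF: "?F ` Hom n x y \<subseteq> Hom n (?F x) (?F y)"
    using whisk_in_Hom[OF d hc(3)] i unfolding whisk_src_def whisk_tgt_def by auto
  have imG: "?G ` Hom n (?F x) (?F y) \<subseteq> Hom n (?G (?F x)) (?G (?F y))"
    using whisk_in_Hom[OF dF] g i l unfolding whisk_src_def whisk_tgt_def by (auto simp: is_cell_def)
  have "bij_betw (\<lambda>a. ?G (?F a)) (Hom n x y) (Hom n (?G (?F x)) (?G (?F y)))"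
    using pseudo_inverse_whisk(1)[OF equiv l(2,1) order.refl hc(1,2) g(1,2,3) \<gamma> d] by simp
  moreover have "inj_on (\<lambda>b. ?F (?G b)) (Hom n (?F x) (?F y))"
    using pseudo_inverse_whisk(1)[OF equiv l(2,1) order.refl g(1,2) hc(1,2) g(4) \<gamma>' dF]
    by (simp add: bij_betw_def)
  ultimately have "bij_betw ?F (Hom n x y) (Hom n (?F x) (?F y))"
    using bij_betw_if_bij_betw_comp[OF imF imG] by blast
  then show "bij_betw ?F (Hom n x y) (Hom n (whisk_src sd i h n x) (whisk_tgt sd i h n y))"
    using i unfolding whisk_src_def whisk_tgt_def by simp
qed

lemma whisk_ess_surj_step:
  assumes equiv: "whisk_equivalence (Suc l)" and h: "eqv n C l h"
    and l: "l = Suc i" "l < k" "k < n"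
  shows "whisk_ess_surj sd i h k"
  unfolding whisk_ess_surj_def
proof (intro allI impI)
  fix x y b
  assume d: "whisk_dom sd i h k x y"
    and b0: "b \<in> Hom k (whisk_src sd i h k x) (whisk_tgt sd i h k y)" and sb: "s k b = b"
  have i: "i + 1 < k" "i < n" "i < k" "k \<le> n" "l < n"
    using l by auto
  obtain g \<gamma> \<gamma>' where g: "g \<in> cells C" "s l g = g" "composable sd i g h" "composable sd i h g"
    and \<gamma>: "eqv n C (Suc l) \<gamma>" "s l \<gamma> = whisk sd i g h" "t l \<gamma> = face sd i h"
    and \<gamma>': "eqv n C (Suc l) \<gamma>'" "s l \<gamma>' = whisk sd i h g" "t l \<gamma>' = face sd i g"
    using eqv_inverse_whisk[OF h i(5) l(1)] by metis
  have hc: "h \<in> cells C" "s l h = h" "is_cell n C (Suc i) h" "s k h = h"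
    using h l eqv_in_cells eqv_src_fixed bdry_fixed_mono[of l h k] by (auto simp: is_cell_def)
  have gc: "is_cell n C (Suc i) g" "s k g = g"
    using g l bdry_fixed_mono[of l g k] by (auto simp: is_cell_def)
  let ?F = "whisk sd i h" and ?G = "whisk sd i g"
  have b: "b \<in> Hom k (?F x) (?F y)"
    using b0 i unfolding whisk_src_def whisk_tgt_def by simp
  have dF: "whisk_dom sd i g k (?F x) (?F y)"
    using whisk_dom_whisk[OF d hc(3) i(1,4) g(1,3)] .
  note F_in = whisk_in_Hom[OF d hc(3) _ i(3,4)] and G_in = whisk_in_Hom[OF dF gc(1) _ i(3,4)]
  have "?G b \<in> Hom k (?G (?F x)) (?G (?F y))" "s k (?G b) = ?G b"
    using G_in[OF b] i bdry_whisk_higher(1)[OF i(3) l(3) g(1) gc(2)]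
      whisk_dom_composable[OF dF b i(3,4)] b sb unfolding whisk_src_def whisk_tgt_def
    by (simp_all add: Hom_iff)
  then obtain a where a: "a \<in> Hom k x y" "s k a = a" "equivalent k (?G (?F a)) (?G b)"
    using pseudo_inverse_whisk(2)[OF equiv l(1,2) i(4) hc(1,2) g(1,2,3) \<gamma> d l(3)] by blast
  have Fa: "?F a \<in> Hom k (?F x) (?F y)" "s k (?F a) = ?F a"
    using F_in[OF a(1)] bdry_whisk_higher(1)[OF i(3) l(3) hc(1,4)] whisk_dom_composable[OF d a(1) i(3,4)]
      a i unfolding whisk_src_def whisk_tgt_def by (simp_all add: Hom_iff)
  have "composable sd i h (?G (?F a))"
    using G_in[OF Fa(1)] whisk_dom_composable[OF whisk_dom_whisk[OF dF gc(1) i(1,4) hc(1) g(4)]] i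
    unfolding whisk_src_def whisk_tgt_def by auto
  then have "equivalent k (?F (?G (?F a))) (?F (?G b))"
    using equivalent_whisk[OF i(3) l(3) hc(1,4)] a(3) by blast
  then have "equivalent k (?F a) b"
    using pseudo_inverse_whisk(3)[OF equiv l(1,2) i(4) g(1,2) hc(1,2) g(4) \<gamma>' dF l(3) Fa(1) b Fa(2) sb]
    by simp
  then show "\<exists>a \<in> Hom k x y. s k a = a \<and> equivalent k (?F a) b"
    using a(1,2) by blast
qed

theorem whisk_equivalence_holds:
  assumes "1 \<le> l" "l \<le> n"
  shows "whisk_equivalence l"
  using assms(2,1)
proof (induction l rule: inc_induct)
  case base
  then show ?case
    using whisk_bij_top unfolding whisk_equivalence_def by auto
next
  case (step l)
  then obtain i where i: "l = Suc i"
    using not0_implies_Suc by fastforce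
  have "whisk_bij sd i h \<and> whisk_ess_surj sd i h k"
    if "eqv n C l h" "l \<le> k" "k < n" for sd h k
    using whisk_bij_step[OF step.IH that(1) step.hyps(2) i] that
      whisk_ess_surj_base[OF that(1) step.hyps(2) i] whisk_ess_surj_step[OF step.IH that(1) i]
    by (cases "k = l") auto
  then show ?case
    unfolding whisk_equivalence_def using i step.IH step.hyps whisk_bij_step by auto
qed

section \<open>Composites of whiskerings\<close>

definition ess_surj_hom_map :: "nat \<Rightarrow> ('a \<Rightarrow> 'a) \<Rightarrow> 'a \<Rightarrow> 'a \<Rightarrow> 'a \<Rightarrow> 'a \<Rightarrow> bool" where
  "ess_surj_hom_map k F x y x' y' \<longleftrightarrow>
     (\<forall>a \<in> Hom k x y. F a \<in> Hom k x' y') \<and>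
     (\<forall>a \<in> Hom k x y. \<forall>b \<in> Hom k x y. equivalent k a b \<longrightarrow> equivalent k (F a) (F b)) \<and>
     (k < n \<longrightarrow> (\<forall>b \<in> Hom k x' y'. s k b = b \<longrightarrow>
        (\<exists>a \<in> Hom k x y. s k a = a \<and> equivalent k (F a) b))) \<and>
     (k = n \<longrightarrow> bij_betw F (Hom n x y) (Hom n x' y'))"

lemma ess_surj_hom_map_whisk:
  assumes "1 \<le> l" "l \<le> k" "k \<le> n" "eqv n C l h" "whisk_dom sd (l-1) h k x y"
  shows "ess_surj_hom_map k (whisk sd (l-1) h) x y (whisk_src sd (l-1) h k x) (whisk_tgt sd (l-1) h k y)"
proof -
  obtain i where i: "l = Suc i"
    using assms(1) not0_implies_Suc by fastforce
  have equiv: "whisk_equivalence l"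
    using whisk_equivalence_holds assms(1,2,3) by simp
  have h: "is_cell n C (Suc i) h" "h \<in> cells C"
    using assms(4) i eqv_in_cells eqv_src_fixed by (auto simp: is_cell_def)
  have "equivalent k (whisk sd i h a) (whisk sd i h b)"
    if "a \<in> Hom k x y" "equivalent k a b" for a b
  proof -
    have "k < n"
      using that(2) by (rule equivalentE)
    then show ?thesis
      using equivalent_whisk[of i k h sd a b] whisk_dom_composable[of sd i h k x y a] assms i that h
        bdry_fixed_mono[of "Suc i" h k] by (simp add: is_cell_def)
  qed
  then show ?thesis
    unfolding ess_surj_hom_map_def i diff_Suc_1
    using whisk_in_Hom[of sd i h k x y] whisk_equivalence_bij[of i h sd]
      whisk_equivalence_ess_surj[of i h k sd] assms equiv h i
    unfolding whisk_bij_def whisk_ess_surj_def by auto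
qed

lemma ess_surj_hom_map_comp:
  assumes F: "ess_surj_hom_map k F x y x' y'" and G: "ess_surj_hom_map k G x' y' x'' y''"
  shows "ess_surj_hom_map k (G \<circ> F) x y x'' y''"
proof -
  have "\<exists>a \<in> Hom k x y. s k a = a \<and> equivalent k (G (F a)) b"
    if b: "k < n" "b \<in> Hom k x'' y''" "s k b = b" for b
  proof -
    obtain a' where a': "a' \<in> Hom k x' y'" "s k a' = a'" "equivalent k (G a') b"
      using G b unfolding ess_surj_hom_map_def by blast
    obtain a where a: "a \<in> Hom k x y" "s k a = a" "equivalent k (F a) a'"
      using F b(1) a' unfolding ess_surj_hom_map_def by blast
    have "equivalent k (G (F a)) (G a')"
      using F G a a' unfolding ess_surj_hom_map_def by blast
    then show ?thesis
      using a a' equivalent_trans by blast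
  qed
  then show ?thesis
    using F G bij_betw_trans unfolding ess_surj_hom_map_def by auto
qed

lemma ess_surj_hom_map_whisk_fun:
  assumes "1 \<le> k" "k \<le> n" "whisk_fun n C k x y x' y' F"
  shows "ess_surj_hom_map k F x y x' y'"
  using assms(3)
proof (induction rule: whisk_fun.induct)
  case (left l h x y)
  have d: "whisk_dom Left (l-1) h k x y"
    using left by (simp add: whisk_dom_def face_def)
  have w: "whisk Left (l-1) h = c (l-1) h"
    by (simp add: whisk_def fun_eq_iff)
  have st: "whisk_src Left (l-1) h k x = (if l < k then c (l-1) h x else s (k-1) h)"
    "whisk_tgt Left (l-1) h k y = (if l < k then c (l-1) h y else y)"
    using left(1,2) by (auto simp: whisk_src_def whisk_tgt_def whisk_def)
  show ?case
    using ess_surj_hom_map_whisk[OF left(1,2) assms(2) left(3) d] unfolding w st .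
next
  case (right l h x y)
  have d: "whisk_dom Right (l-1) h k x y"
    using right by (simp add: whisk_dom_def face_def)
  have w: "whisk Right (l-1) h = (\<lambda>a. c (l-1) a h)"
    by (simp add: whisk_def fun_eq_iff)
  have st: "whisk_src Right (l-1) h k x = (if l < k then c (l-1) x h else x)"
    "whisk_tgt Right (l-1) h k y = (if l < k then c (l-1) y h else t (k-1) h)"
    using right(1,2) by (auto simp: whisk_src_def whisk_tgt_def whisk_def)
  show ?case
    using ess_surj_hom_map_whisk[OF right(1,2) assms(2) right(3) d] unfolding w st .
next
  case (compose x y x' y' F x'' y'' G)
  then show ?case
    using ess_surj_hom_map_comp by blast
qed

lemma hom_parts:
  "src (hom C k x y) = (\<lambda>j. s (k+j))" "tgt (hom C k x y) = (\<lambda>j. t (k+j))"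
  "comp (hom C k x y) = (\<lambda>j. c (k+j))"
  by (simp_all add: hom_def)

lemma is_cell_hom:
  "k \<le> n \<Longrightarrow> is_cell (n-k) (hom C k x y) j g \<longleftrightarrow> g \<in> Hom k x y \<and> (k + j < n \<longrightarrow> s (k+j) g = g)"
  by (auto simp: is_cell_def hom_parts)

lemma Hom_bdry_closed:
  assumes "e \<in> Hom k x y" "1 \<le> k" "k \<le> r" "r < n"
  shows "s r e \<in> Hom k x y" "t r e \<in> Hom k x y"
  using assms by (auto simp: Hom_iff)

lemma Hom_if_bdry_in_Hom:
  assumes "g \<in> cells C" "1 \<le> k" "k \<le> r" "r < n" "s r g \<in> Hom k x y \<or> t r g \<in> Hom k x y"
  shows "g \<in> Hom k x y"
  using assms by (auto simp: Hom_iff)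

lemma eqv_aux_hom:
  assumes "1 \<le> k" "1 \<le> j" "k + j + d = n" "e \<in> Hom k x y" "eqv_aux n C d (k+j) e"
  shows "eqv_aux (n-k) (hom C k x y) d j e"
  using assms(2-5)
proof (induction d arbitrary: j e)
  case 0
  define r where "r = k + j - 1"
  have r: "k + (j-1) = r" "k \<le> r" "r < n"
    using 0 assms(1) r_def by auto
  obtain g where g: "is_cell n C (k+j) g" "s r g = t r e" "t r g = s r e" "c r e g = s r e" "c r g e = t r e"
    using "0.prems"(4) r_def by auto
  have "g \<in> Hom k x y"
    using g Hom_bdry_closed[OF "0.prems"(3) assms(1) r(2,3)]
    by (intro Hom_if_bdry_in_Hom[OF _ assms(1) r(2,3)]) (auto simp: is_cell_def)
  moreover have "is_cell (n-k) (hom C k x y) j g"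
    using g(1)[unfolded is_cell_def] calculation r(2,3) by (simp add: is_cell_hom)
  ultimately show ?case
    unfolding eqv_aux.simps hom_parts r(1) using g(2-5) by (intro exI[of _ g]) simp
next
  case (Suc d)
  define r where "r = k + j - 1"
  have r: "k + (j-1) = r" "k \<le> r" "r < n" "k + j < n" "k + (j + 1) = k + j + 1"
    using Suc.prems assms(1) r_def by auto
  obtain g \<alpha> \<beta> where w: "is_cell n C (k+j) g" "s r g = t r e" "t r g = s r e"
    "is_cell n C (k+j+1) \<alpha>" "s (k+j) \<alpha> = c r g e" "t (k+j) \<alpha> = t r e" "eqv_aux n C d (k+j+1) \<alpha>"
    "is_cell n C (k+j+1) \<beta>" "s (k+j) \<beta> = c r e g" "t (k+j) \<beta> = s r e" "eqv_aux n C d (k+j+1) \<beta>"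
    using Suc.prems(4) r_def by auto
  have e: "e \<in> cells C" "s r e \<in> Hom k x y" "t r e \<in> Hom k x y"
    using Hom_bdry_closed[OF Suc.prems(3) assms(1) r(2,3)] Suc.prems(3) by (auto simp: Hom_iff)
  have g: "g \<in> Hom k x y"
    using w e by (intro Hom_if_bdry_in_Hom[OF _ assms(1) r(2,3)]) (auto simp: is_cell_def)
  have "c r g e \<in> Hom k x y" "c r e g \<in> Hom k x y"
    using w e g r assms(1) by (auto simp: Hom_iff is_cell_def)
  then have "\<alpha> \<in> Hom k x y" "\<beta> \<in> Hom k x y"
    using w r assms(1) Hom_if_bdry_in_Hom[of _ k "k+j" x y] by (auto simp: is_cell_def)
  moreover have "eqv_aux (n-k) (hom C k x y) d (j+1) \<alpha>" "eqv_aux (n-k) (hom C k x y) d (j+1) \<beta>"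
    using Suc.IH[of "j+1" \<alpha>] Suc.IH[of "j+1" \<beta>] calculation w(7,11) Suc.prems(2) r(5) by simp_all
  moreover have "is_cell (n-k) (hom C k x y) j g" "is_cell (n-k) (hom C k x y) (j+1) \<alpha>"
    "is_cell (n-k) (hom C k x y) (j+1) \<beta>"
    using w(1,4,8)[unfolded is_cell_def] g calculation(1,2) r(2,3) by (simp_all add: is_cell_hom)
  ultimately show ?case
    unfolding eqv_aux.simps hom_parts r(1) using w(2,3,5,6,9,10)
    by (intro exI[of _ g] exI[of _ \<alpha>] exI[of _ \<beta>]) simp
qed

lemma eqv_hom:
  assumes "1 \<le> k" "k < n" "eqv n C (Suc k) e" "e \<in> Hom k x y"
  shows "eqv (n-k) (hom C k x y) 1 e"
proof -
  have "eqv_aux (n-k) (hom C k x y) (n - Suc k) 1 e"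
    using eqv_aux_hom[OF assms(1) _ _ assms(4), of 1 "n - Suc k"] assms(2,3) by (simp add: eqv_def)
  moreover have "is_cell (n-k) (hom C k x y) 1 e"
    using assms eqv_src_fixed[OF assms(3)] by (simp add: is_cell_hom)
  ultimately show ?thesis
    using assms(2) by (simp add: eqv_def Suc_diff_Suc)
qed

theorem whisk_fun_ess_surj:
  assumes "1 \<le> k" "k \<le> n" "whisk_fun n C k x y x' y' F"
  shows "ess_surj (n - k) (hom C k x y) (hom C k x' y') F"
    and "k = n \<Longrightarrow> bij_betw F (Hom k x y) (Hom k x' y')"
proof -
  note F = ess_surj_hom_map_whisk_fun[OF assms]
  show "k = n \<Longrightarrow> bij_betw F (Hom k x y) (Hom k x' y')"
    using F by (simp add: ess_surj_hom_map_def)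
  show "ess_surj (n - k) (hom C k x y) (hom C k x' y') F"
  proof (cases "k = n")
    case True
    then have "Hom k x' y' = F ` Hom k x y"
      using F by (simp add: ess_surj_hom_map_def bij_betw_def)
    then show ?thesis
      using True by (auto simp: ess_surj_def)
  next
    case False
    then have kn: "k < n"
      using assms(2) by simp
    have "\<exists>a e. is_cell (n-k) (hom C k x y) 0 a \<and> is_cell (n-k) (hom C k x' y') 1 e \<and>
        s k e = F a \<and> t k e = b \<and> eqv (n-k) (hom C k x' y') 1 e"
      if b: "b \<in> Hom k x' y'" "s k b = b" for b
    proof -
      obtain a where a: "a \<in> Hom k x y" "s k a = a" "equivalent k (F a) b"
        using F kn b unfolding ess_surj_hom_map_def by blast
      then obtain e where e: "eqv n C (Suc k) e" "e \<in> cells C" "s k e = F a" "t k e = b"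
        by (elim equivalentE)
      then have "e \<in> Hom k x' y'"
        using b assms(1) kn by (intro Hom_if_bdry_in_Hom[of e k k]) auto
      then show ?thesis
        using a e kn assms(1) eqv_hom[OF assms(1) kn e(1)] eqv_src_fixed[OF e(1)]
        by (intro exI[of _ a] exI[of _ e]) (simp add: is_cell_hom)
    qed
    then show ?thesis
      using kn by (simp add: ess_surj_def is_cell_hom hom_parts)
  qed
qed

end

theorem proposition5p0p1:
  fixes C :: "'a ncat" and n k :: nat and x y x' y' :: 'a and F :: "'a \<Rightarrow> 'a"
  assumes "1 \<le> k" and "k \<le> n" and "n \<le> 4"
    and "strict_ncat n C"
    and "whisk_fun n C k x y x' y' F"
  shows "ess_surj (n - k) (hom C k x y) (hom C k x' y') F
         \<and> (k = n \<longrightarrow> bij_betw F (cells (hom C k x y)) (cells (hom C k x' y')))"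
  using strict_ncategory.whisk_fun_ess_surj[OF strict_ncategoryI[OF assms(4)] assms(1,2,5)] by blast

end
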